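(* Let $D$ be a directed graph with vertex set $I$ and $A=kD$ its path algebra, and let $r$ be any of $r_b,r_l,r_k,r_j$. Then $r(A)=\mathrm{g.m.}\,r(A)=\sum\{r(A_{ij})\mid i,j\in I\}=kR(D)$.
   Context: $k$ is a field; $D$ may be infinite and have multiple arrows and loops. The path algebra $A=kD=\bigoplus_{i,j\in I}A_{ij}$, where $A_{ij}$ is the $k$-span of paths from $i$ to $j$ of length $\ge1$, plus the trivial path $e_{ii}$ when $i=j$; multiplication is concatenation. A regular path is a path of length $\ge1$ from a vertex $i$ to a vertex $j$ such that there is no path from $j$ to $i$; $R(D)$ is the set of regular paths and $kR(D)$ its $k$-span. $r(A)$ is the ring radical of $A$ ($r_b$ Baer/prime, $r_l$ Levitzki, $r_k$ nil (Köthe), $r_j$ Jacobson). $A_{ij}$ is regarded as a $\Gamma$-ring with $\Gamma=A_{ji}$, and $r(A_{ij})$ is the corresponding $\Gamma$-ring radical (Coppage–Luh). $\mathrm{g.m.}\,r(A)$ is the largest ideal of $A$ of the form $\bigoplus B_{ij}$, $B_{ij}\subseteq A_{ij}$, contained in $r(A)$. *)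

theory Defs
  imports Main "HOL-Library.Function_Algebras"
begin

text \<open>A ring is given by a carrier A (an additive subgroup of an ab_group_add type) and a
multiplication mul.  Only additive structure and mul are used (no unit is assumed).\<close>

definition add_subgroup :: "'a::ab_group_add set \<Rightarrow> bool" where
  "add_subgroup S \<longleftrightarrow> 0 \<in> S \<and> (\<forall>x\<in>S. \<forall>y\<in>S. x - y \<in> S)"

definition add_span :: "'a::ab_group_add set \<Rightarrow> 'a set" where
  "add_span S = \<Inter>{G. S \<subseteq> G \<and> add_subgroup G}"

definition r_ideal :: "'a::ab_group_add set \<Rightarrow> ('a \<Rightarrow> 'a \<Rightarrow> 'a) \<Rightarrow> 'a set \<Rightarrow> bool" where
  "r_ideal A mul I \<longleftrightarrow> I \<subseteq> A \<and> add_subgroup I \<and> (\<forall>a\<in>A. \<forall>x\<in>I. mul a x \<in> I \<and> mul x a \<in> I)"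

text \<open>ideal generated by S; for S a union of ideals this is their sum\<close>
definition ideal_gen :: "'a::ab_group_add set \<Rightarrow> ('a \<Rightarrow> 'a \<Rightarrow> 'a) \<Rightarrow> 'a set \<Rightarrow> 'a set" where
  "ideal_gen A mul S = \<Inter>{J. r_ideal A mul J \<and> S \<subseteq> J}"

definition r_prime :: "'a::ab_group_add set \<Rightarrow> ('a \<Rightarrow> 'a \<Rightarrow> 'a) \<Rightarrow> 'a set \<Rightarrow> bool" where
  "r_prime A mul P \<longleftrightarrow> r_ideal A mul P \<and>
     (\<forall>B C. r_ideal A mul B \<and> r_ideal A mul C \<and> (\<forall>b\<in>B. \<forall>c\<in>C. mul b c \<in> P) \<longrightarrow> B \<subseteq> P \<or> C \<subseteq> P)"

definition baer_rad :: "'a::ab_group_add set \<Rightarrow> ('a \<Rightarrow> 'a \<Rightarrow> 'a) \<Rightarrow> 'a set" where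
  "baer_rad A mul = \<Inter>{P. r_prime A mul P}"

text \<open>x^(n+1) = foldl mul x (replicate n x)\<close>
definition r_nil :: "('a::ab_group_add \<Rightarrow> 'a \<Rightarrow> 'a) \<Rightarrow> 'a set \<Rightarrow> bool" where
  "r_nil mul I \<longleftrightarrow> (\<forall>x\<in>I. \<exists>n. foldl mul x (replicate n x) = 0)"

definition r_locnil :: "('a::ab_group_add \<Rightarrow> 'a \<Rightarrow> 'a) \<Rightarrow> 'a set \<Rightarrow> bool" where
  "r_locnil mul I \<longleftrightarrow> (\<forall>F. finite F \<and> F \<subseteq> I \<longrightarrow>
      (\<exists>n. \<forall>x xs. x \<in> F \<and> set xs \<subseteq> F \<and> length xs = n \<longrightarrow> foldl mul x xs = 0))"

definition r_qreg :: "'a::ab_group_add set \<Rightarrow> ('a \<Rightarrow> 'a \<Rightarrow> 'a) \<Rightarrow> 'a set \<Rightarrow> bool" where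
  "r_qreg A mul I \<longleftrightarrow> (\<forall>a\<in>I. \<exists>b\<in>A. a + b + mul a b = 0)"

definition nil_rad :: "'a::ab_group_add set \<Rightarrow> ('a \<Rightarrow> 'a \<Rightarrow> 'a) \<Rightarrow> 'a set" where
  "nil_rad A mul = ideal_gen A mul (\<Union>{I. r_ideal A mul I \<and> r_nil mul I})"

definition lev_rad :: "'a::ab_group_add set \<Rightarrow> ('a \<Rightarrow> 'a \<Rightarrow> 'a) \<Rightarrow> 'a set" where
  "lev_rad A mul = ideal_gen A mul (\<Union>{I. r_ideal A mul I \<and> r_locnil mul I})"

definition jac_rad :: "'a::ab_group_add set \<Rightarrow> ('a \<Rightarrow> 'a \<Rightarrow> 'a) \<Rightarrow> 'a set" where
  "jac_rad A mul = ideal_gen A mul (\<Union>{I. r_ideal A mul I \<and> r_qreg A mul I})"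

datatype radical_kind = Baer | Levitzki | Koethe | Jacobson

fun ring_rad :: "radical_kind \<Rightarrow> 'a::ab_group_add set \<Rightarrow> ('a \<Rightarrow> 'a \<Rightarrow> 'a) \<Rightarrow> 'a set" where
  "ring_rad Baer A mul = baer_rad A mul"
| "ring_rad Levitzki A mul = lev_rad A mul"
| "ring_rad Koethe A mul = nil_rad A mul"
| "ring_rad Jacobson A mul = jac_rad A mul"

section \<open>Gamma-rings (Coppage--Luh): M, Gamma, ternary product tri a g b = a g b\<close>

definition g_ideal :: "'a::ab_group_add set \<Rightarrow> 'a set \<Rightarrow> ('a \<Rightarrow> 'a \<Rightarrow> 'a \<Rightarrow> 'a) \<Rightarrow> 'a set \<Rightarrow> bool" where
  "g_ideal M G tri I \<longleftrightarrow> I \<subseteq> M \<and> add_subgroup I \<and>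
     (\<forall>a\<in>M. \<forall>g\<in>G. \<forall>x\<in>I. tri a g x \<in> I \<and> tri x g a \<in> I)"

definition g_ideal_gen :: "'a::ab_group_add set \<Rightarrow> 'a set \<Rightarrow> ('a \<Rightarrow> 'a \<Rightarrow> 'a \<Rightarrow> 'a) \<Rightarrow> 'a set \<Rightarrow> 'a set" where
  "g_ideal_gen M G tri S = \<Inter>{J. g_ideal M G tri J \<and> S \<subseteq> J}"

definition g_prime :: "'a::ab_group_add set \<Rightarrow> 'a set \<Rightarrow> ('a \<Rightarrow> 'a \<Rightarrow> 'a \<Rightarrow> 'a) \<Rightarrow> 'a set \<Rightarrow> bool" where
  "g_prime M G tri P \<longleftrightarrow> g_ideal M G tri P \<and>
     (\<forall>U V. g_ideal M G tri U \<and> g_ideal M G tri V \<and> (\<forall>u\<in>U. \<forall>g\<in>G. \<forall>v\<in>V. tri u g v \<in> P)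
        \<longrightarrow> U \<subseteq> P \<or> V \<subseteq> P)"

definition g_baer_rad :: "'a::ab_group_add set \<Rightarrow> 'a set \<Rightarrow> ('a \<Rightarrow> 'a \<Rightarrow> 'a \<Rightarrow> 'a) \<Rightarrow> 'a set" where
  "g_baer_rad M G tri = \<Inter>{P. g_prime M G tri P}"

definition gfold :: "('a \<Rightarrow> 'a \<Rightarrow> 'a \<Rightarrow> 'a) \<Rightarrow> 'a \<Rightarrow> ('a \<times> 'a) list \<Rightarrow> 'a" where
  "gfold tri x ps = foldl (\<lambda>acc gy. tri acc (fst gy) (snd gy)) x ps"

text \<open>x is nilpotent iff (x Gamma)^n x = 0 for some n\<close>
definition g_nil :: "'a::ab_group_add set \<Rightarrow> ('a \<Rightarrow> 'a \<Rightarrow> 'a \<Rightarrow> 'a) \<Rightarrow> 'a set \<Rightarrow> bool" where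
  "g_nil G tri I \<longleftrightarrow> (\<forall>x\<in>I. \<exists>n. \<forall>gs. length gs = n \<and> set gs \<subseteq> G \<longrightarrow>
       gfold tri x (map (\<lambda>g. (g, x)) gs) = 0)"

text \<open>locally nilpotent: for finite F in I and finite Phi in Gamma, (F Phi)^n F = 0 for some n\<close>
definition g_locnil :: "'a::ab_group_add set \<Rightarrow> ('a \<Rightarrow> 'a \<Rightarrow> 'a \<Rightarrow> 'a) \<Rightarrow> 'a set \<Rightarrow> bool" where
  "g_locnil G tri I \<longleftrightarrow> (\<forall>F \<Phi>. finite F \<and> F \<subseteq> I \<and> finite \<Phi> \<and> \<Phi> \<subseteq> G \<longrightarrow>
      (\<exists>n. \<forall>x ps. x \<in> F \<and> length ps = n \<and> set ps \<subseteq> \<Phi> \<times> F \<longrightarrow> gfold tri x ps = 0))"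

text \<open>right quasi-regular in every ring (M, +, \<lambda>x y. x g y)\<close>
definition g_qreg :: "'a::ab_group_add set \<Rightarrow> 'a set \<Rightarrow> ('a \<Rightarrow> 'a \<Rightarrow> 'a \<Rightarrow> 'a) \<Rightarrow> 'a set \<Rightarrow> bool" where
  "g_qreg M G tri I \<longleftrightarrow> (\<forall>a\<in>I. \<forall>g\<in>G. \<exists>b\<in>M. a + b + tri a g b = 0)"

definition g_nil_rad :: "'a::ab_group_add set \<Rightarrow> 'a set \<Rightarrow> ('a \<Rightarrow> 'a \<Rightarrow> 'a \<Rightarrow> 'a) \<Rightarrow> 'a set" where
  "g_nil_rad M G tri = g_ideal_gen M G tri (\<Union>{I. g_ideal M G tri I \<and> g_nil G tri I})"

definition g_lev_rad :: "'a::ab_group_add set \<Rightarrow> 'a set \<Rightarrow> ('a \<Rightarrow> 'a \<Rightarrow> 'a \<Rightarrow> 'a) \<Rightarrow> 'a set" where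
  "g_lev_rad M G tri = g_ideal_gen M G tri (\<Union>{I. g_ideal M G tri I \<and> g_locnil G tri I})"

definition g_jac_rad :: "'a::ab_group_add set \<Rightarrow> 'a set \<Rightarrow> ('a \<Rightarrow> 'a \<Rightarrow> 'a \<Rightarrow> 'a) \<Rightarrow> 'a set" where
  "g_jac_rad M G tri = g_ideal_gen M G tri (\<Union>{I. g_ideal M G tri I \<and> g_qreg M G tri I})"

fun gamma_rad :: "radical_kind \<Rightarrow> 'a::ab_group_add set \<Rightarrow> 'a set \<Rightarrow> ('a \<Rightarrow> 'a \<Rightarrow> 'a \<Rightarrow> 'a) \<Rightarrow> 'a set" where
  "gamma_rad Baer M G tri = g_baer_rad M G tri"
| "gamma_rad Levitzki M G tri = g_lev_rad M G tri"
| "gamma_rad Koethe M G tri = g_nil_rad M G tri"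
| "gamma_rad Jacobson M G tri = g_jac_rad M G tri"

record ('v, 'e) quiver =
  verts :: "'v set"
  arrs :: "'e set"
  src :: "'e \<Rightarrow> 'v"
  tgt :: "'e \<Rightarrow> 'v"

definition wf_quiver :: "('v, 'e) quiver \<Rightarrow> bool" where
  "wf_quiver Q \<longleftrightarrow> (\<forall>a\<in>arrs Q. src Q a \<in> verts Q \<and> tgt Q a \<in> verts Q)"

text \<open>A path is (start vertex, list of arrows); the empty list is the trivial path e_ii.\<close>
type_synonym ('v, 'e) qpath = "'v \<times> 'e list"

definition pend :: "('v, 'e) quiver \<Rightarrow> ('v, 'e) qpath \<Rightarrow> 'v" where
  "pend Q p = (if snd p = [] then fst p else tgt Q (last (snd p)))"

definition is_path :: "('v, 'e) quiver \<Rightarrow> ('v, 'e) qpath \<Rightarrow> bool" where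
  "is_path Q p \<longleftrightarrow> fst p \<in> verts Q \<and> set (snd p) \<subseteq> arrs Q \<and>
     (snd p \<noteq> [] \<longrightarrow> src Q (hd (snd p)) = fst p) \<and>
     (\<forall>n. Suc n < length (snd p) \<longrightarrow> tgt Q (snd p ! n) = src Q (snd p ! Suc n))"

definition has_path :: "('v, 'e) quiver \<Rightarrow> 'v \<Rightarrow> 'v \<Rightarrow> bool" where
  "has_path Q i j \<longleftrightarrow> (\<exists>p. is_path Q p \<and> fst p = i \<and> pend Q p = j)"

definition regular_path :: "('v, 'e) quiver \<Rightarrow> ('v, 'e) qpath \<Rightarrow> bool" where
  "regular_path Q p \<longleftrightarrow> is_path Q p \<and> snd p \<noteq> [] \<and> \<not> has_path Q (pend Q p) (fst p)"

text \<open>Elements of kD: finitely supported k-valued functions on paths.\<close>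
definition palg :: "('v, 'e) quiver \<Rightarrow> (('v, 'e) qpath \<Rightarrow> 'k::field) set" where
  "palg Q = {f. finite {p. f p \<noteq> 0} \<and> (\<forall>p. f p \<noteq> 0 \<longrightarrow> is_path Q p)}"

text \<open>Multiplication = concatenation: (f*g)(p) = sum over splittings p = q r of f q * g r.\<close>
definition pmul :: "('v, 'e) quiver \<Rightarrow> (('v, 'e) qpath \<Rightarrow> 'k::field) \<Rightarrow> (('v, 'e) qpath \<Rightarrow> 'k) \<Rightarrow> (('v, 'e) qpath \<Rightarrow> 'k)" where
  "pmul Q f g = (\<lambda>p. if is_path Q p then
      (\<Sum>n\<in>{0..length (snd p)}. f (fst p, take n (snd p)) * g (pend Q (fst p, take n (snd p)), drop n (snd p)))
     else 0)"

definition palg_ij :: "('v, 'e) quiver \<Rightarrow> 'v \<Rightarrow> 'v \<Rightarrow> (('v, 'e) qpath \<Rightarrow> 'k::field) set" where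
  "palg_ij Q i j = {f \<in> palg Q. \<forall>p. f p \<noteq> 0 \<longrightarrow> fst p = i \<and> pend Q p = j}"

definition pcomp :: "('v, 'e) quiver \<Rightarrow> 'v \<Rightarrow> 'v \<Rightarrow> (('v, 'e) qpath \<Rightarrow> 'k::field) \<Rightarrow> (('v, 'e) qpath \<Rightarrow> 'k)" where
  "pcomp Q i j f = (\<lambda>p. if fst p = i \<and> pend Q p = j then f p else 0)"

definition ptri :: "('v, 'e) quiver \<Rightarrow> (('v, 'e) qpath \<Rightarrow> 'k::field) \<Rightarrow> (('v, 'e) qpath \<Rightarrow> 'k) \<Rightarrow> (('v, 'e) qpath \<Rightarrow> 'k) \<Rightarrow> (('v, 'e) qpath \<Rightarrow> 'k)" where
  "ptri Q a g b = pmul Q (pmul Q a g) b"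

definition kR :: "('v, 'e) quiver \<Rightarrow> (('v, 'e) qpath \<Rightarrow> 'k::field) set" where
  "kR Q = {f \<in> palg Q. \<forall>p. f p \<noteq> 0 \<longrightarrow> regular_path Q p}"

text \<open>g.m. r(A): largest ideal of the form (+)B_ij, B_ij \<subseteq> A_ij, contained in r(A)
  (= sum of all such graded ideals).\<close>
definition gm_rad :: "radical_kind \<Rightarrow> ('v, 'e) quiver \<Rightarrow> (('v, 'e) qpath \<Rightarrow> 'k::field) set" where
  "gm_rad r Q = ideal_gen (palg Q) (pmul Q)
     (\<Union>{I. r_ideal (palg Q) (pmul Q) I \<and>
          (\<forall>x\<in>I. \<forall>i\<in>verts Q. \<forall>j\<in>verts Q. pcomp Q i j x \<in> I) \<and>
          I \<subseteq> ring_rad r (palg Q) (pmul Q)})"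

definition sum_gamma_rad :: "radical_kind \<Rightarrow> ('v, 'e) quiver \<Rightarrow> (('v, 'e) qpath \<Rightarrow> 'k::field) set" where
  "sum_gamma_rad r Q = add_span (\<Union>i\<in>verts Q. \<Union>j\<in>verts Q.
       gamma_rad r (palg_ij Q i j) (palg_ij Q j i) (ptri Q))"

end

theory Submission
  imports Defs
begin

text \<open>
  Order the vertices of D by reachability. In a nonzero product of elements of kR(D) the ends of
  the successive factors strictly increase, so kR(D) is a locally nilpotent ideal, hence nil and
  quasi-regular; and a regular path p spans, together with all paths enclosing it, a square-zero
  ideal, so kR(D) lies in every prime ideal.

  Conversely, let x lie in an ideal and have a non-regular path in its support. Among the paths of
  the strong component of that path, pick one, L, of maximal length with x L \<noteq> 0, and close it
  to a cycle c by a path h from the end of L back to its start. Then a = x h, with h scaled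
  suitably, has leading coefficient -1 at c, so no power of a vanishes and a has no quasi-inverse.
  The elements vanishing on a strong component form a prime ideal. Hence each radical is kR(D),
  which is graded, so it is also g.m. r(A).

  For the Gamma-ring A_ij with Gamma = A_ji: if there is no path from j to i, then Gamma = 0, so
  every Gamma-radical is all of A_ij, which consists of regular paths. Otherwise the same leading
  cycle argument, with h a path from j to i, shows that all Gamma-radicals vanish. Summing over
  i and j gives kR(D).
\<close>

section \<open>Paths\<close>

text \<open>ptake p n and pdrop Q p n are the two factors of the n-th splitting of p in pmul_def.\<close>

abbreviation ptake :: "('v, 'e) qpath \<Rightarrow> nat \<Rightarrow> ('v, 'e) qpath" where
  "ptake p n \<equiv> (fst p, take n (snd p))"

abbreviation pdrop :: "('v, 'e) quiver \<Rightarrow> ('v, 'e) qpath \<Rightarrow> nat \<Rightarrow> ('v, 'e) qpath" where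
  "pdrop Q p n \<equiv> (pend Q (ptake p n), drop n (snd p))"

abbreviation pcat :: "('v, 'e) qpath \<Rightarrow> ('v, 'e) qpath \<Rightarrow> ('v, 'e) qpath" where
  "pcat p q \<equiv> (fst p, snd p @ snd q)"

lemma pend_Nil [simp]: "pend Q (a, []) = a"
  by (simp add: pend_def)

lemma pend_Cons [simp]: "pend Q (a, e # es) = pend Q (tgt Q e, es)"
  by (simp add: pend_def)

lemma pend_append: "pend Q (a, xs @ ys) = pend Q (pend Q (a, xs), ys)"
  by (simp add: pend_def)

lemma pend_pcat: "pend Q p = fst q \<Longrightarrow> pend Q (pcat p q) = pend Q q"
  by (metis pend_append prod.collapse)

lemma pdrop_pend: "pend Q (pdrop Q p n) = pend Q p"
  by (metis append_take_drop_id pend_append prod.collapse)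

lemma ptake_pcat [simp]: "ptake (pcat p q) (length (snd p)) = p"
  by simp

lemma pdrop_pcat [simp]: "pend Q p = fst q \<Longrightarrow> pdrop Q (pcat p q) (length (snd p)) = q"
  by (simp add: prod_eq_iff)

lemma is_path_Nil [simp]: "is_path Q (a, []) \<longleftrightarrow> a \<in> verts Q"
  by (simp add: is_path_def)

lemma has_path_path: "is_path Q p \<Longrightarrow> has_path Q (fst p) (pend Q p)"
  unfolding has_path_def by blast

lemma has_path_refl: "i \<in> verts Q \<Longrightarrow> has_path Q i i"
  using has_path_path[of Q "(i, [])"] by simp

locale well_formed_quiver =
  fixes Q :: "('v, 'e) quiver"
  assumes wf: "wf_quiver Q"
begin

lemma is_path_Cons [simp]:
  "is_path Q (a, e # es) \<longleftrightarrow> a \<in> verts Q \<and> e \<in> arrs Q \<and> src Q e = a \<and> is_path Q (tgt Q e, es)"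
  (is "?l \<longleftrightarrow> ?r")
proof
  assume ?l
  then have "\<And>n. Suc n < length (e # es) \<Longrightarrow> tgt Q ((e # es) ! n) = src Q ((e # es) ! Suc n)"
    and "e \<in> arrs Q"
    by (simp_all add: is_path_def)
  with \<open>?l\<close> wf show ?r
    by (cases es) (auto simp: is_path_def wf_quiver_def nth_Cons split: nat.splits)
next
  assume ?r
  then show ?l
    by (cases es) (auto simp: is_path_def less_Suc_eq_0_disj nth_Cons split: nat.splits)
qed

lemma path_verts: "is_path Q p \<Longrightarrow> fst p \<in> verts Q \<and> pend Q p \<in> verts Q"
proof (induction "snd p" arbitrary: p)
  case (Cons e es)
  then show ?case
    by (metis is_path_Cons list.inject pend_Cons prod.collapse snd_conv)
qed (simp add: is_path_def pend_def)

lemma is_path_append: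
  "is_path Q (a, xs @ ys) \<longleftrightarrow> is_path Q (a, xs) \<and> is_path Q (pend Q (a, xs), ys)"
  by (induction xs arbitrary: a) (auto dest: path_verts)

lemma is_path_pcat: "is_path Q p \<Longrightarrow> is_path Q q \<Longrightarrow> pend Q p = fst q \<Longrightarrow> is_path Q (pcat p q)"
  by (metis is_path_append prod.collapse)

lemma is_path_split:
  assumes "is_path Q p"
  shows "is_path Q (ptake p n)" "is_path Q (pdrop Q p n)"
  using assms is_path_append[of "fst p" "take n (snd p)" "drop n (snd p)"] by auto

lemma has_path_trans: "has_path Q i j \<Longrightarrow> has_path Q j k \<Longrightarrow> has_path Q i k"
  unfolding has_path_def by (metis fst_conv is_path_pcat pend_pcat)


lemma has_path_split:
  assumes "is_path Q p"
  shows "has_path Q (fst p) (pend Q (ptake p n))" "has_path Q (pend Q (ptake p n)) (pend Q p)"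
  using has_path_path[OF is_path_split(1)[OF assms, of n]] has_path_path[OF is_path_split(2)[OF assms, of n]]
  by (simp_all add: pdrop_pend)
end

section \<open>The path algebra\<close>

definition pmonom :: "('v, 'e) qpath \<Rightarrow> 'k \<Rightarrow> ('v, 'e) qpath \<Rightarrow> 'k::zero" where
  "pmonom p c = (\<lambda>q. if q = p then c else 0)"

definition palg_on :: "('v, 'e) quiver \<Rightarrow> (('v, 'e) qpath \<Rightarrow> bool) \<Rightarrow> (('v, 'e) qpath \<Rightarrow> 'k::field) set" where
  "palg_on Q P = {f \<in> palg Q. \<forall>p. f p \<noteq> 0 \<longrightarrow> P p}"

lemma kR_eq_palg_on: "kR Q = palg_on Q (regular_path Q)"
  by (simp add: kR_def palg_on_def)

lemma kR_palg: "f \<in> kR Q \<Longrightarrow> f \<in> palg Q"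
  by (simp add: kR_def)

lemma kR_regular: "f \<in> kR Q \<Longrightarrow> f p \<noteq> 0 \<Longrightarrow> regular_path Q p"
  unfolding kR_def by blast

lemma palg_ij_eq_palg_on: "palg_ij Q i j = palg_on Q (\<lambda>p. fst p = i \<and> pend Q p = j)"
  by (simp add: palg_ij_def palg_on_def)

lemma palg_eq_palg_on: "palg Q = palg_on Q (\<lambda>_. True)"
  by (simp add: palg_on_def)

lemma palgI: "finite {p. f p \<noteq> 0} \<Longrightarrow> (\<And>p. f p \<noteq> 0 \<Longrightarrow> is_path Q p) \<Longrightarrow> f \<in> palg Q"
  by (simp add: palg_def)

lemma palg_finite: "f \<in> palg Q \<Longrightarrow> finite {p. f p \<noteq> 0}"
  by (simp add: palg_def)

lemma palg_path: "f \<in> palg Q \<Longrightarrow> f p \<noteq> 0 \<Longrightarrow> is_path Q p"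
  unfolding palg_def by blast

lemma palg_onI: "f \<in> palg Q \<Longrightarrow> (\<And>p. f p \<noteq> 0 \<Longrightarrow> P p) \<Longrightarrow> f \<in> palg_on Q P"
  by (simp add: palg_on_def)

lemma palg_onD: "f \<in> palg_on Q P \<Longrightarrow> f p \<noteq> 0 \<Longrightarrow> P p"
  unfolding palg_on_def by blast

lemma palg_on_palg: "f \<in> palg_on Q P \<Longrightarrow> f \<in> palg Q"
  by (simp add: palg_on_def)

lemma add_subgroup_add: "add_subgroup G \<Longrightarrow> x \<in> G \<Longrightarrow> y \<in> G \<Longrightarrow> x + y \<in> G"
  unfolding add_subgroup_def by (metis diff_0 diff_minus_eq_add)

lemma add_subgroup_zero: "add_subgroup G \<Longrightarrow> 0 \<in> G"
  by (simp add: add_subgroup_def)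

lemma palg_on_subgroup: "add_subgroup (palg_on Q P :: (('v, 'e) qpath \<Rightarrow> 'k::field) set)"
  unfolding add_subgroup_def
proof (intro conjI ballI)
  fix f g :: "('v, 'e) qpath \<Rightarrow> 'k"
  assume "f \<in> palg_on Q P" "g \<in> palg_on Q P"
  moreover have "{p. (f - g) p \<noteq> 0} \<subseteq> {p. f p \<noteq> 0} \<union> {p. g p \<noteq> 0}"
    by auto
  ultimately show "f - g \<in> palg_on Q P"
    unfolding palg_on_def palg_def by (auto intro: finite_subset)
qed (simp add: palg_on_def palg_def)

lemma palg_subgroup: "add_subgroup (palg Q)"
  using palg_on_subgroup palg_eq_palg_on by metis

lemma pmonom_palg_on: "is_path Q p \<Longrightarrow> P p \<Longrightarrow> pmonom p c \<in> palg_on Q P"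
  unfolding palg_on_def palg_def pmonom_def by (auto intro: finite_subset[of _ "{p}"])

lemma pmonom_palg: "is_path Q p \<Longrightarrow> pmonom p c \<in> palg Q"
  using pmonom_palg_on[of Q p "\<lambda>_. True"] by (simp add: palg_eq_palg_on)

lemma palg_mem_add_subgroupI:
  fixes f :: "('v, 'e) qpath \<Rightarrow> 'k::field"
  assumes G: "add_subgroup G" and f: "f \<in> palg Q"
    and monoms: "\<And>p. f p \<noteq> 0 \<Longrightarrow> pmonom p (f p) \<in> G"
  shows "f \<in> G"
proof -
  have "finite {p. f p \<noteq> 0}"
    using f by (rule palg_finite)
  then show ?thesis
    using monoms
  proof (induction "{p. f p \<noteq> 0}" arbitrary: f rule: finite_induct)
    case empty
    then have "f = 0"
      by (auto simp: fun_eq_iff)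
    then show ?case
      using add_subgroup_zero[OF G] by (simp add: zero_fun_def)
  next
    case (insert q X)
    let ?f' = "f(q := 0)"
    have "?f' \<in> G"
    proof (rule insert.hyps(3))
      show "X = {p. ?f' p \<noteq> 0}"
        using insert.hyps by auto
      fix p
      assume "?f' p \<noteq> 0"
      then show "pmonom p (?f' p) \<in> G"
        using insert.prems by (auto split: if_splits)
    qed
    moreover have "pmonom q (f q) \<in> G"
      using insert.hyps(4) insert.prems by blast
    moreover have "f = pmonom q (f q) + ?f'"
      by (auto simp: fun_eq_iff pmonom_def)
    ultimately show ?case
      by (metis add_subgroup_add[OF G])
  qed
qed

lemma pmul_nonzeroE:
  assumes "pmul Q f g p \<noteq> 0"
  obtains n where "is_path Q p" "n \<le> length (snd p)" "f (ptake p n) \<noteq> 0" "g (pdrop Q p n) \<noteq> 0"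
proof -
  have "is_path Q p"
    using assms by (auto simp: pmul_def split: if_splits)
  moreover obtain n where "n \<in> {0..length (snd p)}" "f (ptake p n) * g (pdrop Q p n) \<noteq> 0"
    using assms by (auto simp: pmul_def split: if_splits intro: sum.not_neutral_contains_not_neutral)
  ultimately show thesis
    using that by auto
qed

lemma pmul_single:
  assumes "is_path Q p" "m \<le> length (snd p)"
    and "\<And>n. n \<le> length (snd p) \<Longrightarrow> n \<noteq> m \<Longrightarrow> f (ptake p n) * g (pdrop Q p n) = 0"
  shows "pmul Q f g p = f (ptake p m) * g (pdrop Q p m)"
proof -
  have "(\<Sum>n\<in>{0..length (snd p)}. f (ptake p n) * g (pdrop Q p n)) = f (ptake p m) * g (pdrop Q p m)"
    using assms(2,3) by (subst sum.mono_neutral_right[of _ "{m}"]) auto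
  then show ?thesis
    using assms(1) by (simp add: pmul_def)
qed

lemma pmul_Nil: "a \<in> verts Q \<Longrightarrow> pmul Q f g (a, []) = f (a, []) * g (a, [])"
  by (simp add: pmul_def)

lemma pmul_zero_left [simp]: "pmul Q 0 g = 0"
  by (simp add: pmul_def fun_eq_iff)

lemma pmul_zero_right [simp]: "pmul Q f 0 = 0"
  by (simp add: pmul_def fun_eq_iff)

lemma pmul_add_left: "pmul Q (f + g) h = pmul Q f h + pmul Q g h"
  by (simp add: pmul_def fun_eq_iff distrib_right sum.distrib)

lemma pmul_lincomb_right:
  "pmul Q f (\<lambda>p. \<Sum>k\<in>K. c k * g k p) = (\<lambda>p. \<Sum>k\<in>K. c k * pmul Q f (g k) p)"
  by (simp add: pmul_def fun_eq_iff sum_distrib_left algebra_simps sum.swap[of _ K])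

lemma palg_pmul: 
  assumes "f \<in> palg Q" "g \<in> palg Q"
  shows "pmul Q f g \<in> palg Q"
proof (rule palgI)
  have "{p. pmul Q f g p \<noteq> 0} \<subseteq> (\<lambda>(q, r). pcat q r) ` ({q. f q \<noteq> 0} \<times> {r. g r \<noteq> 0})"
  proof
    fix p assume "p \<in> {p. pmul Q f g p \<noteq> 0}"
    then obtain n where "f (ptake p n) \<noteq> 0" "g (pdrop Q p n) \<noteq> 0"
      by (auto elim: pmul_nonzeroE)
    moreover have "p = pcat (ptake p n) (pdrop Q p n)"
      by simp
    ultimately show "p \<in> (\<lambda>(q, r). pcat q r) ` ({q. f q \<noteq> 0} \<times> {r. g r \<noteq> 0})"
      by (auto intro!: image_eqI[where x = "(ptake p n, pdrop Q p n)"])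
  qed
  moreover have "finite ({q. f q \<noteq> 0} \<times> {r. g r \<noteq> 0})"
    using assms by (simp add: palg_finite)
  ultimately show "finite {p. pmul Q f g p \<noteq> 0}"
    by (meson finite_imageI finite_subset)
qed (auto elim: pmul_nonzeroE)

context well_formed_quiver
begin

lemma pmul_at_suffix:
  assumes "is_path Q (a, xs)" "m \<le> length xs"
  shows "pmul Q g h (pend Q (a, take m xs), drop m xs) =
    (\<Sum>n\<in>{m..length xs}. g (pend Q (a, take m xs), drop m (take n xs)) * h (pend Q (a, take n xs), drop n xs))"
proof -
  have pend_take: "pend Q (pend Q (a, take m xs), drop m (take (k + m) xs)) = pend Q (a, take (k + m) xs)" for k
  proof -
    have "take m xs @ drop m (take (k + m) xs) = take (k + m) xs"
      by (metis append_take_drop_id le_add2 min.absorb1 take_take)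
    then show ?thesis
      by (metis pend_append)
  qed
  have "pmul Q g h (pend Q (a, take m xs), drop m xs) =
    (\<Sum>k\<in>{0..length xs - m}. g (pend Q (a, take m xs), drop m (take (k + m) xs)) *
       h (pend Q (a, take (k + m) xs), drop (k + m) xs))"
    using is_path_split(2)[OF assms(1), of m] assms(2)
    by (simp add: pmul_def pend_take take_drop add.commute)
  also have "\<dots> = (\<Sum>n\<in>{m..length xs}. g (pend Q (a, take m xs), drop m (take n xs)) *
       h (pend Q (a, take n xs), drop n xs))"
    using assms(2) sum.shift_bounds_cl_nat_ivl[of "\<lambda>n. g (pend Q (a, take m xs), drop m (take n xs)) *
      h (pend Q (a, take n xs), drop n xs)" 0 m "length xs - m"] by simp
  finally show ?thesis .
qed

lemma pmul_assoc: "pmul Q (pmul Q f g) h = pmul Q f (pmul Q g h)"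
proof
  fix p
  show "pmul Q (pmul Q f g) h p = pmul Q f (pmul Q g h) p"
  proof (cases "is_path Q p")
    case False
    then show ?thesis
      by (simp add: pmul_def)
  next
    case True
    obtain a xs where p: "p = (a, xs)"
      by fastforce
    \<comment> \<open>Both sides sum the terms F m n over all double splittings m \<le> n of p.\<close>
    define F where "F m n = f (a, take m xs) * g (pend Q (a, take m xs), drop m (take n xs)) *
      h (pend Q (a, take n xs), drop n xs)" for m n
    let ?L = "length xs"
    have "pmul Q (pmul Q f g) h p =
      (\<Sum>n\<in>{0..?L}. pmul Q f g (a, take n xs) * h (pend Q (a, take n xs), drop n xs))"
      using True by (simp add: p pmul_def[of Q "pmul Q f g" h])
    also have "\<dots> = (\<Sum>n\<in>{0..?L}. \<Sum>m\<in>{m \<in> {0..?L}. m \<le> n}. F m n)"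
      using is_path_split(1)[OF True] unfolding p
      by (intro sum.cong) (auto simp: pmul_def F_def sum_distrib_right min_absorb2 intro: sum.cong)
    also have "\<dots> = (\<Sum>m\<in>{0..?L}. \<Sum>n\<in>{n \<in> {0..?L}. m \<le> n}. F m n)"
      by (rule sum.swap_restrict) simp_all
    also have "\<dots> = (\<Sum>m\<in>{0..?L}. \<Sum>n\<in>{m..?L}. F m n)"
      by (intro sum.cong) auto
    also have "\<dots> = (\<Sum>m\<in>{0..?L}. f (a, take m xs) * pmul Q g h (pend Q (a, take m xs), drop m xs))"
      by (intro sum.cong) (simp_all add: F_def sum_distrib_left mult.assoc pmul_at_suffix[OF True[unfolded p]])
    also have "\<dots> = pmul Q f (pmul Q g h) p"
      using True by (simp add: p pmul_def[of Q f "pmul Q g h"])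
    finally show ?thesis .
  qed
qed

end

section \<open>Leading terms\<close>

definition split_closed :: "('v, 'e) quiver \<Rightarrow> ('v, 'e) qpath set \<Rightarrow> bool" where
  "split_closed Q S \<longleftrightarrow> (\<forall>p\<in>S. is_path Q p \<longrightarrow> (\<forall>n\<le>length (snd p). ptake p n \<in> S \<and> pdrop Q p n \<in> S))"

definition cat_closed :: "('v, 'e) quiver \<Rightarrow> ('v, 'e) qpath set \<Rightarrow> bool" where
  "cat_closed Q S \<longleftrightarrow> (\<forall>p\<in>S. \<forall>q\<in>S. is_path Q p \<longrightarrow> is_path Q q \<longrightarrow> pend Q p = fst q \<longrightarrow> pcat p q \<in> S)"

definition vanishes_above ::
  "('v, 'e) quiver \<Rightarrow> ('v, 'e) qpath set \<Rightarrow> (('v, 'e) qpath \<Rightarrow> 'k::zero) \<Rightarrow> nat \<Rightarrow> bool" where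
  "vanishes_above Q S f d \<longleftrightarrow> (\<forall>p\<in>S. is_path Q p \<longrightarrow> d < length (snd p) \<longrightarrow> f p = 0)"

lemma split_closed_UNIV [simp]: "split_closed Q UNIV"
  by (simp add: split_closed_def)

lemma cat_closed_UNIV [simp]: "cat_closed Q UNIV"
  by (simp add: cat_closed_def)

lemma split_closedD:
  "split_closed Q S \<Longrightarrow> p \<in> S \<Longrightarrow> is_path Q p \<Longrightarrow> n \<le> length (snd p) \<Longrightarrow> ptake p n \<in> S \<and> pdrop Q p n \<in> S"
  by (simp add: split_closed_def)

lemma cat_closedD:
  "cat_closed Q S \<Longrightarrow> p \<in> S \<Longrightarrow> q \<in> S \<Longrightarrow> is_path Q p \<Longrightarrow> is_path Q q \<Longrightarrow> pend Q p = fst q \<Longrightarrow> pcat p q \<in> S"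
  by (simp add: cat_closed_def)

lemma vanishes_aboveD:
  "vanishes_above Q S f d \<Longrightarrow> p \<in> S \<Longrightarrow> is_path Q p \<Longrightarrow> d < length (snd p) \<Longrightarrow> f p = 0"
  by (simp add: vanishes_above_def)

lemma vanishes_above_pmonom: "vanishes_above Q S (pmonom p c) (length (snd p))"
  by (auto simp: vanishes_above_def pmonom_def)

lemma pmul_pmonom_pend: "pmul Q f (pmonom h t) p \<noteq> 0 \<Longrightarrow> pend Q p = pend Q h"
  by (erule pmul_nonzeroE) (auto simp: pmonom_def pdrop_pend split: if_splits)

context well_formed_quiver
begin

lemma vanishes_above_pmul:
  assumes S: "split_closed Q S" and f: "vanishes_above Q S f d" and g: "vanishes_above Q S g e"
  shows "vanishes_above Q S (pmul Q f g) (d + e)"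
  unfolding vanishes_above_def
proof (intro ballI impI, rule ccontr)
  fix p
  assume p: "p \<in> S" "is_path Q p" "d + e < length (snd p)" and "pmul Q f g p \<noteq> 0"
  then obtain n where n: "n \<le> length (snd p)" "f (ptake p n) \<noteq> 0" "g (pdrop Q p n) \<noteq> 0"
    by (auto elim: pmul_nonzeroE)
  have "ptake p n \<in> S" "pdrop Q p n \<in> S"
    using split_closedD[OF S p(1,2) n(1)] by auto
  then have "length (snd (ptake p n)) \<le> d" "length (snd (pdrop Q p n)) \<le> e"
    using n(2,3) f g is_path_split[OF p(2)] by (meson vanishes_aboveD not_le)+
  then show False
    using p(3) n(1) by simp
qed

lemma pmul_pcat_top:
  assumes S: "split_closed Q S"
    and f: "vanishes_above Q S f (length (snd p))" and g: "vanishes_above Q S g (length (snd q))"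
    and pq: "pcat p q \<in> S" "is_path Q (pcat p q)" "pend Q p = fst q"
  shows "pmul Q f g (pcat p q) = f p * g q"
proof -
  have "pmul Q f g (pcat p q) = f (ptake (pcat p q) (length (snd p))) * g (pdrop Q (pcat p q) (length (snd p)))"
  proof (rule pmul_single[OF pq(2)])
    fix n
    assume n: "n \<le> length (snd (pcat p q))" "n \<noteq> length (snd p)"
    note parts = split_closedD[OF S pq(1,2) n(1)] is_path_split[OF pq(2), of n]
    show "f (ptake (pcat p q) n) * g (pdrop Q (pcat p q) n) = 0"
    proof (cases "n < length (snd p)")
      case True
      then have "g (pdrop Q (pcat p q) n) = 0"
        using n parts by (intro vanishes_aboveD[OF g]) auto
      then show ?thesis
        by simp
    next
      case False
      then have "f (ptake (pcat p q) n) = 0"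
        using n parts by (intro vanishes_aboveD[OF f]) auto
      then show ?thesis
        by simp
    qed
  qed simp
  then show ?thesis
    using pq(3) by simp
qed

lemma exists_top_path:
  assumes f: "f \<in> palg Q" and p: "p \<in> S" "f p \<noteq> 0"
  obtains L where "L \<in> S" "is_path Q L" "f L \<noteq> 0" "vanishes_above Q S f (length (snd L))"
proof -
  let ?X = "{q \<in> S. f q \<noteq> 0}"
  have X: "finite ?X" "p \<in> ?X"
    using palg_finite[OF f] p by (auto intro: finite_subset[rotated])
  define m where "m = Max ((\<lambda>q. length (snd q)) ` ?X)"
  have "m \<in> (\<lambda>q. length (snd q)) ` ?X"
    unfolding m_def using X by (intro Max_in) blast+
  then obtain L where L: "L \<in> ?X" "length (snd L) = m"
    by blast
  have "length (snd q) \<le> length (snd L)" if "q \<in> ?X" for q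
    using X(1) that L(2) by (simp add: m_def)
  then have "vanishes_above Q S f (length (snd L))"
    by (force simp: vanishes_above_def)
  then show thesis
    using L(1) palg_path[OF f] that by blast
qed

lemma pmul_pmonom_top:
  assumes S: "split_closed Q S" and b: "vanishes_above Q S b (length (snd L))"
    and Lh: "pcat L h \<in> S" "is_path Q (pcat L h)" "pend Q L = fst h"
  shows "vanishes_above Q S (pmul Q b (pmonom h t)) (length (snd L) + length (snd h))"
    and "pmul Q b (pmonom h t) (pcat L h) = b L * t"
  using vanishes_above_pmul[OF S b vanishes_above_pmonom] pmul_pcat_top[OF S b vanishes_above_pmonom Lh]
  by (simp_all add: pmonom_def)

lemma pmul_pmonom_pmul_top:
  assumes S: "split_closed Q S"
    and b: "vanishes_above Q S b (length (snd L))" and c: "vanishes_above Q S c (length (snd M))"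
    and w: "pcat (pcat L h) M \<in> S" "is_path Q (pcat (pcat L h) M)" "pend Q L = fst h" "pend Q h = fst M"
  shows "pmul Q (pmul Q b (pmonom h t)) c (pcat (pcat L h) M) = b L * t * c M"
proof -
  have Lh: "pcat L h \<in> S" "is_path Q (pcat L h)"
    using split_closedD[OF S w(1,2), of "length (snd L) + length (snd h)"]
      is_path_split(1)[OF w(2), of "length (snd L) + length (snd h)"]
    by simp_all
  have "vanishes_above Q S (pmul Q b (pmonom h t)) (length (snd (pcat L h)))"
    "pmul Q b (pmonom h t) (pcat L h) = b L * t"
    using pmul_pmonom_top[OF S b Lh w(3)] by simp_all
  then show ?thesis
    using pmul_pcat_top[OF S _ c w(1,2)] pend_pcat[OF w(3)] w(4) by simp
qed

end

section \<open>Leading cycles\<close>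

text \<open>The normalisation a c = -1 makes even a trivial cycle c an obstruction to quasi-regularity.\<close>

definition leading_cycle ::
  "('v, 'e) quiver \<Rightarrow> ('v, 'e) qpath set \<Rightarrow> (('v, 'e) qpath \<Rightarrow> 'k::field) \<Rightarrow> ('v, 'e) qpath \<Rightarrow> bool" where
  "leading_cycle Q S a c \<longleftrightarrow> split_closed Q S \<and> cat_closed Q S \<and>
     c \<in> S \<and> is_path Q c \<and> pend Q c = fst c \<and>
     vanishes_above Q S a (length (snd c)) \<and> a c = -1 \<and> (\<forall>p. a p \<noteq> 0 \<longrightarrow> pend Q p = fst c)"

lemma pmul_restrict_start:
  assumes "\<And>p. a p \<noteq> 0 \<Longrightarrow> pend Q p = u"
  shows "pmul Q a b = pmul Q a (\<lambda>p. if fst p = u then b p else 0)"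
proof
  fix p
  have "a (ptake p n) * b (pdrop Q p n) = a (ptake p n) * (if fst (pdrop Q p n) = u then b (pdrop Q p n) else 0)"
    for n
    using assms[of "ptake p n"] by (cases "a (ptake p n) = 0") auto
  then show "pmul Q a b p = pmul Q a (\<lambda>p. if fst p = u then b p else 0) p"
    unfolding pmul_def by (metis (no_types, lifting) sum.cong)
qed

lemma foldl_replicate_Suc: "foldl f a (replicate (Suc n) y) = f (foldl f a (replicate n y)) y"
  by (induction n arbitrary: a) auto

lemma concat_replicate_Suc: "concat (replicate n xs) @ xs = concat (replicate (Suc n) xs)"
  by (induction n) auto

context well_formed_quiver
begin

lemma leading_cycleI:
  assumes S: "split_closed Q S" "cat_closed Q S"
    and L: "L \<in> S" "is_path Q L" "x L \<noteq> 0" "vanishes_above Q S x (length (snd L))"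
    and h: "h \<in> S" "is_path Q h" "fst h = pend Q L" "pend Q h = fst L"
  shows "leading_cycle Q S (pmul Q x (pmonom h (- 1 / x L))) (pcat L h)"
proof -
  have Lh: "pcat L h \<in> S" "is_path Q (pcat L h)" "pend Q L = fst h"
    using S(2) L h by (auto intro: cat_closedD is_path_pcat)
  show ?thesis
    unfolding leading_cycle_def
    using S Lh h pmul_pmonom_top[OF S(1) L(4) Lh] L(3) pend_pcat[OF Lh(3)]
    by (auto dest: pmul_pmonom_pend)
qed

lemma leading_cycle_powers:
  assumes "leading_cycle Q S a c"
  defines "cpow n \<equiv> (fst c, concat (replicate (Suc n) (snd c)))"
  shows "cpow n \<in> S \<and> is_path Q (cpow n) \<and> pend Q (cpow n) = fst c \<and>
    vanishes_above Q S (foldl (pmul Q) a (replicate n a)) (length (snd (cpow n))) \<and>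
    foldl (pmul Q) a (replicate n a) (cpow n) = (- 1) ^ Suc n"
proof (induction n)
  case 0
  then show ?case
    using assms unfolding leading_cycle_def by simp
next
  case (Suc n)
  from assms have S: "split_closed Q S" "cat_closed Q S" and c: "c \<in> S" "is_path Q c" "pend Q c = fst c"
    and a: "vanishes_above Q S a (length (snd c))" "a c = -1"
    unfolding leading_cycle_def by auto
  have next_pow: "cpow (Suc n) = pcat (cpow n) c"
    unfolding cpow_def by (simp add: concat_replicate_Suc del: replicate.simps)
  have "pcat (cpow n) c \<in> S" "is_path Q (pcat (cpow n) c)" "pend Q (cpow n) = fst c"
    using Suc.IH c by (auto intro: cat_closedD[OF S(2)] is_path_pcat)
  with Suc.IH show ?case
    unfolding next_pow foldl_replicate_Suc
    using vanishes_above_pmul[OF S(1) _ a(1)] pmul_pcat_top[OF S(1) _ a(1)] pend_pcat[of Q "cpow n" c] a(2) c(3)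
    by auto
qed

lemma leading_cycle_not_nilpotent:
  assumes "leading_cycle Q S a c"
  shows "foldl (pmul Q) a (replicate n a) \<noteq> 0"
  using leading_cycle_powers[OF assms, of n] by (auto simp: zero_fun_def)

lemma leading_cycle_quasi_inverse_vanishes:
  assumes lc: "leading_cycle Q S a c" and c_nonempty: "snd c \<noteq> []"
    and b: "b \<in> palg Q" "\<And>p. b p \<noteq> 0 \<Longrightarrow> fst p = fst c"
    and E: "\<And>p. fst p = fst c \<Longrightarrow> a p + b p + pmul Q a b p = 0"
  shows "vanishes_above Q S b 0"
proof (rule ccontr)
  from lc have S: "split_closed Q S" "cat_closed Q S" and c: "c \<in> S" "is_path Q c" "pend Q c = fst c"
    and a: "vanishes_above Q S a (length (snd c))" "a c = -1"
    unfolding leading_cycle_def by auto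
  assume "\<not> vanishes_above Q S b 0"
  then obtain p where p: "p \<in> S" "is_path Q p" "0 < length (snd p)" "b p \<noteq> 0"
    unfolding vanishes_above_def by auto
  \<comment> \<open>A top path M of b of positive length makes a b nonzero at c M, where a and b both vanish.\<close>
  obtain M where M: "M \<in> S" "is_path Q M" "b M \<noteq> 0" "vanishes_above Q S b (length (snd M))"
    using exists_top_path[OF b(1) p(1,4)] .
  have "0 < length (snd M)"
    using vanishes_aboveD[OF M(4) p(1,2)] p(3,4) by (metis gr0I)
  have w: "pcat c M \<in> S" "is_path Q (pcat c M)" "pend Q c = fst M"
    using c M b(2)[OF M(3)] by (auto intro: cat_closedD[OF S(2)] is_path_pcat)
  have "a (pcat c M) = 0"
    using \<open>0 < length (snd M)\<close> w by (intro vanishes_aboveD[OF a(1)]) auto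
  moreover have "b (pcat c M) = 0"
    using c_nonempty w by (intro vanishes_aboveD[OF M(4)]) auto
  moreover have "pmul Q a b (pcat c M) = a c * b M"
    by (rule pmul_pcat_top[OF S(1) a(1) M(4) w])
  ultimately show False
    using E[of "pcat c M"] a(2) M(3) by simp
qed

lemma leading_cycle_not_quasi_regular:
  assumes lc: "leading_cycle Q S a c" and b: "b \<in> palg Q"
  shows "a + b + pmul Q a b \<noteq> 0"
proof
  assume E0: "a + b + pmul Q a b = 0"
  from lc have S: "split_closed Q S" and c: "c \<in> S" "is_path Q c" "pend Q c = fst c"
    and a: "vanishes_above Q S a (length (snd c))" "a c = -1" "\<And>p. a p \<noteq> 0 \<Longrightarrow> pend Q p = fst c"
    unfolding leading_cycle_def by auto
  define u where "u = fst c"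
  define e where "e = (u, [] :: 'e list)"
  \<comment> \<open>Only the part of b starting at u meets the support of a, which ends at u.\<close>
  define b' where "b' p = (if fst p = u then b p else 0)" for p
  have b': "b' \<in> palg Q"
    using b unfolding b'_def palg_def by (auto intro: finite_subset[rotated])
  have "b' = (\<lambda>p. if fst p = u then b p else 0)"
    by (simp add: fun_eq_iff b'_def)
  then have "pmul Q a b = pmul Q a b'"
    using pmul_restrict_start[of a Q u b, OF a(3)[folded u_def]] by simp
  then have E: "a p + b' p + pmul Q a b' p = 0" if "fst p = u" for p
    using fun_cong[OF E0, of p] that by (simp add: b'_def)
  have e: "e \<in> S" "u \<in> verts Q"
    using split_closedD[OF S c(1,2), of 0] path_verts[OF c(2)] by (auto simp: e_def u_def)
  have at_e: "a e + b' e + a e * b' e = 0"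
    using E[of e] pmul_Nil[OF e(2), of a b'] by (simp add: e_def)
  \<comment> \<open>In both cases one of a e, b' e equals -1, contradicting the equation at the trivial path e.\<close>
  show False
  proof (cases "snd c = []")
    case True
    then have "a e = -1"
      using a(2) by (metis e_def prod.collapse u_def)
    then show False
      using at_e by simp
  next
    case False
    have "vanishes_above Q S b' 0"
    proof (rule leading_cycle_quasi_inverse_vanishes[OF lc False b'])
      show "fst p = fst c" if "b' p \<noteq> 0" for p
        using that by (simp add: b'_def u_def split: if_splits)
      show "a p + b' p + pmul Q a b' p = 0" if "fst p = fst c" for p
        using E that by (simp add: u_def)
    qed
    then have b'_top: "vanishes_above Q S b' (length (snd e))"
      by (simp add: e_def)
    have ce: "pcat c e = c" "pend Q c = fst e"
      using c(3) by (simp_all add: e_def u_def)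
    then have "pmul Q a b' c = a c * b' e"
      using pmul_pcat_top[OF S a(1) b'_top] c by simp
    moreover have "b' c = 0"
      using False c b'_top by (intro vanishes_aboveD[OF b'_top]) (auto simp: e_def)
    ultimately have "b' e = -1"
      using E[of c] a(2) by (simp add: u_def)
    then show False
      using at_e by simp
  qed
qed

end

section \<open>The ring radicals of kD\<close>

definition encloses :: "('v, 'e) quiver \<Rightarrow> ('v, 'e) qpath \<Rightarrow> ('v, 'e) qpath \<Rightarrow> bool" where
  "encloses Q p q \<longleftrightarrow> has_path Q (fst q) (fst p) \<and> has_path Q (pend Q p) (pend Q q)"

definition support_ends :: "('v, 'e) quiver \<Rightarrow> (('v, 'e) qpath \<Rightarrow> 'k::zero) set \<Rightarrow> 'v set" where
  "support_ends Q F = (\<Union>f\<in>F. pend Q ` {q. f q \<noteq> 0})"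

lemma finite_support_ends: "finite F \<Longrightarrow> F \<subseteq> palg Q \<Longrightarrow> finite (support_ends Q F)"
  unfolding support_ends_def by (auto intro: palg_finite)

lemma pend_in_support_ends: "f \<in> F \<Longrightarrow> f p \<noteq> 0 \<Longrightarrow> pend Q p \<in> support_ends Q F"
  unfolding support_ends_def by blast

definition scc_paths :: "('v, 'e) quiver \<Rightarrow> 'v \<Rightarrow> ('v, 'e) qpath set" where
  "scc_paths Q i = {p. is_path Q p \<and> has_path Q i (fst p) \<and> has_path Q (pend Q p) i}"

lemma ideal_gen_Union_eq:
  assumes "r_ideal A mul J" "J \<in> \<I>" "\<And>I. I \<in> \<I> \<Longrightarrow> I \<subseteq> J"
  shows "ideal_gen A mul (\<Union>\<I>) = J"
  using assms unfolding ideal_gen_def by blast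

lemma r_locnil_imp_r_nil:
  assumes "r_locnil mul I"
  shows "r_nil mul I"
  unfolding r_nil_def
proof
  fix x
  assume "x \<in> I"
  with assms obtain n where "\<forall>y ys. y \<in> {x} \<and> set ys \<subseteq> {x} \<and> length ys = n \<longrightarrow> foldl mul y ys = 0"
    unfolding r_locnil_def by (meson empty_subsetI finite.emptyI finite.insertI insert_subset)
  moreover have "set (replicate n x) \<subseteq> {x}"
    by auto
  ultimately have "foldl mul x (replicate n x) = 0"
    by simp
  then show "\<exists>n. foldl mul x (replicate n x) = 0" ..
qed

lemma alternating_telescope:
  fixes r :: "nat \<Rightarrow> 'k::comm_ring_1"
  shows "r 0 + (\<Sum>k<m. (-1) ^ Suc k * r k) + (\<Sum>k<m. (-1) ^ Suc k * r (Suc k)) = (-1) ^ m * r m"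
  by (induction m) (auto simp: algebra_simps)

lemma palg_lincomb:
  assumes "finite K" "\<And>k. k \<in> K \<Longrightarrow> f k \<in> palg Q"
  shows "(\<lambda>p. \<Sum>k\<in>K. c k * f k p) \<in> palg Q"
proof (rule palgI)
  have nonzero: "\<exists>k\<in>K. f k p \<noteq> 0" if "(\<Sum>k\<in>K. c k * f k p) \<noteq> 0" for p
    using that by (metis (no_types, lifting) mult_zero_right sum.neutral)
  then have "{p. (\<Sum>k\<in>K. c k * f k p) \<noteq> 0} \<subseteq> (\<Union>k\<in>K. {p. f k p \<noteq> 0})"
    by blast
  moreover have "finite (\<Union>k\<in>K. {p. f k p \<noteq> 0})"
    using assms palg_finite by blast
  ultimately show "finite {p. (\<Sum>k\<in>K. c k * f k p) \<noteq> 0}"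
    by (rule finite_subset)
  fix p
  assume "(\<Sum>k\<in>K. c k * f k p) \<noteq> 0"
  then obtain k where "k \<in> K" "f k p \<noteq> 0"
    using nonzero by blast
  then show "is_path Q p"
    using assms(2) palg_path by blast
qed

lemma palg_foldl_pmul: "a \<in> palg Q \<Longrightarrow> set xs \<subseteq> palg Q \<Longrightarrow> foldl (pmul Q) a xs \<in> palg Q"
  by (induction xs arbitrary: a) (auto intro: palg_pmul)

context well_formed_quiver
begin

lemma split_closed_scc_paths: "split_closed Q (scc_paths Q i)"
  unfolding split_closed_def
proof (intro ballI impI allI)
  fix p n
  assume "p \<in> scc_paths Q i" "is_path Q p"
  then show "ptake p n \<in> scc_paths Q i \<and> pdrop Q p n \<in> scc_paths Q i"
    using has_path_split[of p n] unfolding scc_paths_def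
    by (auto intro: has_path_trans is_path_split simp: pdrop_pend)
qed

lemma cat_closed_scc_paths: "cat_closed Q (scc_paths Q i)"
  unfolding cat_closed_def scc_paths_def
  using is_path_pcat pend_pcat by fastforce

lemma not_regular_scc_paths: "is_path Q p \<Longrightarrow> \<not> regular_path Q p \<Longrightarrow> p \<in> scc_paths Q (fst p)"
  unfolding regular_path_def scc_paths_def
  using has_path_path has_path_refl path_verts by (fastforce simp: pend_def)

lemma scc_paths_connecting_path:
  assumes "L \<in> scc_paths Q i" "M \<in> scc_paths Q i"
  obtains h where "h \<in> scc_paths Q i" "fst h = pend Q L" "pend Q h = fst M"
proof -
  have "has_path Q (pend Q L) (fst M)"
    using assms has_path_trans[of "pend Q L" i "fst M"] unfolding scc_paths_def by blast
  then obtain h where h: "is_path Q h" "fst h = pend Q L" "pend Q h = fst M"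
    unfolding has_path_def by blast
  have "is_path Q L" "is_path Q M"
    using assms unfolding scc_paths_def by auto
  then have "has_path Q i (fst h)" "has_path Q (pend Q h) i"
    using assms h has_path_trans[OF _ has_path_path[of Q L]] has_path_trans[OF has_path_path[of Q M]]
    unfolding scc_paths_def by auto
  with h that show thesis
    unfolding scc_paths_def by blast
qed

lemma palg_on_ideal:
  assumes ext: "\<And>p n. is_path Q p \<Longrightarrow> n \<le> length (snd p) \<Longrightarrow> P (ptake p n) \<or> P (pdrop Q p n) \<Longrightarrow> P p"
  shows "r_ideal (palg Q) (pmul Q) (palg_on Q P :: (('v, 'e) qpath \<Rightarrow> 'k::field) set)"
  unfolding r_ideal_def
proof (intro conjI ballI)
  fix a x :: "('v, 'e) qpath \<Rightarrow> 'k"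
  assume a: "a \<in> palg Q" and x: "x \<in> palg_on Q P"
  show "pmul Q a x \<in> palg_on Q P"
  proof (rule palg_onI[OF palg_pmul[OF a palg_on_palg[OF x]]])
    fix p
    assume "pmul Q a x p \<noteq> 0"
    then obtain n where "is_path Q p" "n \<le> length (snd p)" "x (pdrop Q p n) \<noteq> 0"
      by (rule pmul_nonzeroE)
    then show "P p"
      using ext palg_onD[OF x] by blast
  qed
  show "pmul Q x a \<in> palg_on Q P"
  proof (rule palg_onI[OF palg_pmul[OF palg_on_palg[OF x] a]])
    fix p
    assume "pmul Q x a p \<noteq> 0"
    then obtain n where "is_path Q p" "n \<le> length (snd p)" "x (ptake p n) \<noteq> 0"
      by (rule pmul_nonzeroE)
    then show "P p"
      using ext palg_onD[OF x] by blast
  qed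
qed (auto simp: palg_on_subgroup intro: palg_on_palg)

lemma kR_ideal: "r_ideal (palg Q) (pmul Q) (kR Q)"
  unfolding kR_eq_palg_on
proof (rule palg_on_ideal)
  fix p n
  assume p: "is_path Q p" "n \<le> length (snd p)" and "regular_path Q (ptake p n) \<or> regular_path Q (pdrop Q p n)"
  then show "regular_path Q p"
    using has_path_split[OF p(1), of n] unfolding regular_path_def by (auto dest: has_path_trans simp: pdrop_pend)
qed

lemma leading_cycle_in_ideal:
  assumes I: "r_ideal (palg Q) (pmul Q) I" and x: "x \<in> I" "x \<notin> kR Q"
  obtains a S c where "a \<in> I" "leading_cycle Q S a c"
proof -
  have xp: "x \<in> palg Q"
    using I x(1) unfolding r_ideal_def by blast
  obtain w where w: "x w \<noteq> 0" "\<not> regular_path Q w"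
    using x xp unfolding kR_def by blast
  define S where "S = scc_paths Q (fst w)"
  have S: "split_closed Q S" "cat_closed Q S"
    unfolding S_def by (rule split_closed_scc_paths cat_closed_scc_paths)+
  have "w \<in> S"
    unfolding S_def using not_regular_scc_paths palg_path[OF xp w(1)] w(2) by blast
  then obtain L where L: "L \<in> S" "is_path Q L" "x L \<noteq> 0" "vanishes_above Q S x (length (snd L))"
    using exists_top_path[OF xp _ w(1)] by blast
  obtain h where h: "h \<in> S" "fst h = pend Q L" "pend Q h = fst L"
    using scc_paths_connecting_path L(1) unfolding S_def by metis
  then have "is_path Q h"
    by (simp add: S_def scc_paths_def)
  with h have "leading_cycle Q S (pmul Q x (pmonom h (- 1 / x L))) (pcat L h)"
    by (intro leading_cycleI[OF S L]) auto
  moreover have "pmul Q x (pmonom h (- 1 / x L)) \<in> I"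
    using I x(1) pmonom_palg[OF \<open>is_path Q h\<close>] unfolding r_ideal_def by blast
  ultimately show thesis
    using that by blast
qed

text \<open>The ends of the successive factors of a nonzero product of elements of kR(D) form a
  strictly increasing chain in the reachability order, so the number of factors is bounded.\<close>
lemma foldl_pmul_regular_chain:
  assumes F: "finite F" "F \<subseteq> kR Q" and x: "x \<in> F" and xs: "set xs \<subseteq> F"
    and nonzero: "foldl (pmul Q) x xs p \<noteq> 0"
  shows "length xs < card {v \<in> support_ends Q F. has_path Q v (pend Q p)}"
  using xs nonzero
proof (induction xs arbitrary: p rule: rev_induct)
  have "finite (support_ends Q F)"
    using finite_support_ends[OF F(1)] F(2) kR_palg by blast
  then have fin: "finite {v \<in> support_ends Q F. has_path Q v t}" for t
    by simp
  have own_end: "pend Q p \<in> {v \<in> support_ends Q F. has_path Q v (pend Q p)}" if "f \<in> F" "f p \<noteq> 0" for f p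
  proof -
    have "is_path Q p"
      using that F(2) kR_palg palg_path by blast
    then show ?thesis
      using pend_in_support_ends[OF that] by (simp add: has_path_refl path_verts)
  qed
  {
    case Nil
    then show ?case
      using own_end[OF x, of p] fin[of "pend Q p"] by (auto simp: card_gt_0_iff)
  next
    case (snoc y xs)
    have "pmul Q (foldl (pmul Q) x xs) y p \<noteq> 0"
      using snoc.prems(2) by simp
    then obtain n where p: "is_path Q p" "foldl (pmul Q) x xs (ptake p n) \<noteq> 0" "y (pdrop Q p n) \<noteq> 0"
      by (rule pmul_nonzeroE)
    have IH: "length xs < card {v \<in> support_ends Q F. has_path Q v (pend Q (ptake p n))}"
      using snoc.IH[OF _ p(2)] snoc.prems(1) by simp
    have y: "y \<in> F"
      using snoc.prems(1) by simp
    then have "regular_path Q (pdrop Q p n)"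
      using F(2) p(3) by (intro kR_regular[of y]) auto
    then have "pend Q p \<notin> {v \<in> support_ends Q F. has_path Q v (pend Q (ptake p n))}"
      by (simp add: regular_path_def pdrop_pend)
    moreover have "has_path Q v (pend Q p)" if "has_path Q v (pend Q (ptake p n))" for v
      using has_path_trans[OF that has_path_split(2)[OF p(1)]] .
    ultimately have "{v \<in> support_ends Q F. has_path Q v (pend Q (ptake p n))} \<subset>
        {v \<in> support_ends Q F. has_path Q v (pend Q p)}"
      using own_end[OF y p(3)] by (auto simp: pdrop_pend)
    then have "card {v \<in> support_ends Q F. has_path Q v (pend Q (ptake p n))} <
        card {v \<in> support_ends Q F. has_path Q v (pend Q p)}"
      by (rule psubset_card_mono[OF fin])
    with IH show ?case
      by simp
  }
qed

lemma kR_locally_nilpotent: "r_locnil (pmul Q) (kR Q)"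
  unfolding r_locnil_def
proof (intro allI impI)
  fix F
  assume F: "finite F \<and> F \<subseteq> kR Q"
  then have fin: "finite (support_ends Q F)"
    using finite_support_ends kR_palg by blast
  have "foldl (pmul Q) x xs = 0" if "x \<in> F" "set xs \<subseteq> F" "length xs = card (support_ends Q F)" for x xs
  proof (rule ccontr)
    assume "foldl (pmul Q) x xs \<noteq> 0"
    then obtain p where "foldl (pmul Q) x xs p \<noteq> 0"
      by (auto simp: fun_eq_iff)
    then have "length xs < card {v \<in> support_ends Q F. has_path Q v (pend Q p)}"
      using foldl_pmul_regular_chain F that by blast
    moreover have "card {v \<in> support_ends Q F. has_path Q v (pend Q p)} \<le> card (support_ends Q F)"
      using fin by (intro card_mono) auto
    ultimately show False
      using that(3) by simp
  qed
  then show "\<exists>n. \<forall>x xs. x \<in> F \<and> set xs \<subseteq> F \<and> length xs = n \<longrightarrow> foldl (pmul Q) x xs = 0"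
    by blast
qed

lemma nilpotent_quasi_regular:
  assumes a: "a \<in> palg Q" and nilpotent: "foldl (pmul Q) a (replicate m a) = 0"
  shows "\<exists>b\<in>palg Q. a + b + pmul Q a b = 0"
proof -
  define pw where "pw k = foldl (pmul Q) a (replicate k a)" for k
  have pw_Suc: "pmul Q a (pw k) = pw (Suc k)" for k
  proof (induction k)
    case (Suc k)
    have "pmul Q a (pw (Suc k)) = pmul Q (pmul Q a (pw k)) a"
      by (simp add: pw_def foldl_replicate_Suc pmul_assoc del: replicate.simps)
    then show ?case
      using Suc.IH by (simp add: pw_def foldl_replicate_Suc del: replicate.simps)
  qed (simp add: pw_def)
  define b where "b = (\<lambda>p. \<Sum>k<m. (-1) ^ Suc k * pw k p)"
  have "b \<in> palg Q"
    unfolding b_def pw_def using a by (intro palg_lincomb palg_foldl_pmul) auto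
  moreover have "pmul Q a b = (\<lambda>p. \<Sum>k<m. (-1) ^ Suc k * pw (Suc k) p)"
    unfolding b_def pmul_lincomb_right pw_Suc ..
  then have "a + b + pmul Q a b = (\<lambda>p. (-1) ^ m * pw m p)"
    using alternating_telescope[of "\<lambda>k. pw k _"] by (simp add: fun_eq_iff b_def pw_def)
  then have "a + b + pmul Q a b = 0"
    using nilpotent by (simp add: pw_def fun_eq_iff)
  ultimately show ?thesis
    by blast
qed

lemma kR_quasi_regular: "r_qreg (palg Q) (pmul Q) (kR Q)"
  unfolding r_qreg_def
proof
  fix a
  assume "a \<in> kR Q"
  moreover obtain m where "foldl (pmul Q) a (replicate m a) = 0"
    using r_locnil_imp_r_nil[OF kR_locally_nilpotent] calculation unfolding r_nil_def by blast
  ultimately show "\<exists>b\<in>palg Q. a + b + pmul Q a b = 0"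
    using nilpotent_quasi_regular by (auto simp: kR_def)
qed

lemma nil_ideal_subset_kR:
  assumes I: "r_ideal (palg Q) (pmul Q) I" and nil: "r_nil (pmul Q) I"
  shows "I \<subseteq> kR Q"
proof
  fix x
  assume x: "x \<in> I"
  show "x \<in> kR Q"
  proof (rule ccontr)
    assume "x \<notin> kR Q"
    then obtain a S c where "a \<in> I" "leading_cycle Q S a c"
      using leading_cycle_in_ideal[OF I x] by blast
    then show False
      using nil leading_cycle_not_nilpotent unfolding r_nil_def by blast
  qed
qed

lemma qreg_ideal_subset_kR:
  assumes I: "r_ideal (palg Q) (pmul Q) I" and qreg: "r_qreg (palg Q) (pmul Q) I"
  shows "I \<subseteq> kR Q"
proof
  fix x
  assume x: "x \<in> I"
  show "x \<in> kR Q"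
  proof (rule ccontr)
    assume "x \<notin> kR Q"
    then obtain a S c where "a \<in> I" "leading_cycle Q S a c"
      using leading_cycle_in_ideal[OF I x] by blast
    then show False
      using qreg leading_cycle_not_quasi_regular unfolding r_qreg_def by blast
  qed
qed

lemma enclosing_ideal: "r_ideal (palg Q) (pmul Q) (palg_on Q (encloses Q p) :: (('v, 'e) qpath \<Rightarrow> 'k::field) set)"
proof (rule palg_on_ideal)
  fix q n
  assume q: "is_path Q q" and "encloses Q p (ptake q n) \<or> encloses Q p (pdrop Q q n)"
  then show "encloses Q p q"
    unfolding encloses_def
    using has_path_trans[OF has_path_split(1)[OF q]] has_path_trans[OF _ has_path_split(2)[OF q]]
    by (auto simp: pdrop_pend)
qed

lemma enclosing_ideal_square_zero:
  fixes b c :: "('v, 'e) qpath \<Rightarrow> 'k::field"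
  assumes p: "regular_path Q p" and bc: "b \<in> palg_on Q (encloses Q p)" "c \<in> palg_on Q (encloses Q p)"
  shows "pmul Q b c = 0"
proof (rule ccontr)
  assume "pmul Q b c \<noteq> 0"
  then obtain q where "pmul Q b c q \<noteq> 0"
    by (auto simp: fun_eq_iff)
  then obtain n where "b (ptake q n) \<noteq> 0" "c (pdrop Q q n) \<noteq> 0"
    by (rule pmul_nonzeroE)
  then have "encloses Q p (ptake q n)" "encloses Q p (pdrop Q q n)"
    using bc palg_onD by blast+
  then have "has_path Q (pend Q p) (fst p)"
    unfolding encloses_def by (auto intro: has_path_trans)
  then show False
    using p unfolding regular_path_def by blast
qed

lemma kR_subset_prime:
  assumes P: "r_prime (palg Q) (pmul Q) (P :: (('v, 'e) qpath \<Rightarrow> 'k::field) set)"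
  shows "kR Q \<subseteq> P"
proof
  fix x :: "('v, 'e) qpath \<Rightarrow> 'k"
  assume x: "x \<in> kR Q"
  have "add_subgroup P"
    using P unfolding r_prime_def r_ideal_def by blast
  then show "x \<in> P"
  proof (rule palg_mem_add_subgroupI)
    show "x \<in> palg Q"
      using x by (rule kR_palg)
    fix p
    assume "x p \<noteq> 0"
    with x have p: "regular_path Q p"
      by (rule kR_regular)
    let ?B = "palg_on Q (encloses Q p) :: (('v, 'e) qpath \<Rightarrow> 'k) set"
    have "pmul Q b c \<in> P" if "b \<in> ?B" "c \<in> ?B" for b c
      using enclosing_ideal_square_zero[OF p that] add_subgroup_zero[OF \<open>add_subgroup P\<close>] by simp
    then have "?B \<subseteq> P"
      using P enclosing_ideal unfolding r_prime_def by blast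
    moreover have "pmonom p (x p) \<in> ?B"
      using p path_verts by (intro pmonom_palg_on) (auto simp: regular_path_def encloses_def has_path_refl)
    ultimately show "pmonom p (x p) \<in> P"
      by blast
  qed
qed

lemma scc_vanishing_ideal:
  "r_ideal (palg Q) (pmul Q) (palg_on Q (\<lambda>q. q \<notin> scc_paths Q i) :: (('v, 'e) qpath \<Rightarrow> 'k::field) set)"
proof (rule palg_on_ideal)
  fix p n
  assume "is_path Q p" "n \<le> length (snd p)" "ptake p n \<notin> scc_paths Q i \<or> pdrop Q p n \<notin> scc_paths Q i"
  then show "p \<notin> scc_paths Q i"
    using split_closedD[OF split_closed_scc_paths] by blast
qed

lemma scc_vanishing_ideal_prime:
  "r_prime (palg Q) (pmul Q) (palg_on Q (\<lambda>q. q \<notin> scc_paths Q i) :: (('v, 'e) qpath \<Rightarrow> 'k::field) set)"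
  (is "r_prime _ _ ?P")
proof -
  let ?T = "scc_paths Q i"
  have "B \<subseteq> ?P \<or> C \<subseteq> ?P"
    if B: "r_ideal (palg Q) (pmul Q) B" and C: "r_ideal (palg Q) (pmul Q) C"
      and BC: "\<forall>b\<in>B. \<forall>c\<in>C. pmul Q b c \<in> ?P" for B C
  proof (rule ccontr)
    assume "\<not> (B \<subseteq> ?P \<or> C \<subseteq> ?P)"
    then obtain b c where b: "b \<in> B" "b \<notin> ?P" and c: "c \<in> C" "c \<notin> ?P"
      by blast
    have bc: "b \<in> palg Q" "c \<in> palg Q"
      using B C b c unfolding r_ideal_def by auto
    then obtain p1 p2 where p12: "p1 \<in> ?T" "b p1 \<noteq> 0" "p2 \<in> ?T" "c p2 \<noteq> 0"
      using b c unfolding palg_on_def by auto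
    obtain L where L: "L \<in> ?T" "is_path Q L" "b L \<noteq> 0" "vanishes_above Q ?T b (length (snd L))"
      using exists_top_path[OF bc(1) p12(1,2)] .
    obtain M where M: "M \<in> ?T" "is_path Q M" "c M \<noteq> 0" "vanishes_above Q ?T c (length (snd M))"
      using exists_top_path[OF bc(2) p12(3,4)] .
    obtain h where h: "h \<in> ?T" "fst h = pend Q L" "pend Q h = fst M"
      using scc_paths_connecting_path[OF L(1) M(1)] .
    then have "is_path Q h"
      by (simp add: scc_paths_def)
    then have Lh: "pcat L h \<in> ?T" "is_path Q (pcat L h)" "pend Q (pcat L h) = fst M"
      using cat_closedD[OF cat_closed_scc_paths L(1) h(1) L(2)] is_path_pcat[OF L(2)] pend_pcat[of Q L h] h(2,3)
      by simp_all
    then have w: "pcat (pcat L h) M \<in> ?T" "is_path Q (pcat (pcat L h) M)"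
      using cat_closedD[OF cat_closed_scc_paths Lh(1) M(1) Lh(2) M(2)] is_path_pcat[OF Lh(2) M(2)]
      by simp_all
    \<comment> \<open>Joining the top paths of b and c by h shows b h c \<notin> ?P.\<close>
    let ?b' = "pmul Q b (pmonom h 1)"
    have "?b' \<in> B"
      using B b(1) pmonom_palg[OF \<open>is_path Q h\<close>] unfolding r_ideal_def by blast
    moreover have "pmul Q ?b' c (pcat (pcat L h) M) = b L * 1 * c M"
      using w h(2,3) by (intro pmul_pmonom_pmul_top[OF split_closed_scc_paths L(4) M(4)]) simp_all
    then have "pmul Q ?b' c \<notin> ?P"
      using L(3) M(3) w(1) palg_onD[of "pmul Q ?b' c" Q "\<lambda>q. q \<notin> ?T"] by auto
    ultimately show False
      using BC c(1) by blast
  qed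
  with scc_vanishing_ideal show ?thesis
    unfolding r_prime_def by blast
qed

lemma baer_rad_eq_kR: "baer_rad (palg Q) (pmul Q) = kR Q"
proof
  show "kR Q \<subseteq> baer_rad (palg Q) (pmul Q)"
    unfolding baer_rad_def using kR_subset_prime by blast
  show "baer_rad (palg Q) (pmul Q) \<subseteq> kR Q"
  proof
    fix x
    assume x: "x \<in> baer_rad (palg Q) (pmul Q)"
    have "r_prime (palg Q) (pmul Q) (palg Q)"
      unfolding r_prime_def r_ideal_def using palg_subgroup palg_pmul by blast
    then have xp: "x \<in> palg Q"
      using x unfolding baer_rad_def by blast
    show "x \<in> kR Q"
    proof (rule ccontr)
      assume "x \<notin> kR Q"
      then obtain w where w: "x w \<noteq> 0" "\<not> regular_path Q w"
        using xp unfolding kR_def by blast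
      then have "w \<in> scc_paths Q (fst w)"
        using not_regular_scc_paths palg_path[OF xp] by blast
      moreover have "x \<in> palg_on Q (\<lambda>q. q \<notin> scc_paths Q (fst w))"
        using x scc_vanishing_ideal_prime unfolding baer_rad_def by blast
      ultimately show False
        using w(1) palg_onD by fastforce
    qed
  qed
qed

lemma ring_rad_eq_kR: "ring_rad r (palg Q) (pmul Q) = kR Q"
proof (cases r)
  case Baer
  then show ?thesis
    by (simp add: baer_rad_eq_kR)
next
  case Levitzki
  have "lev_rad (palg Q) (pmul Q) = kR Q"
    unfolding lev_rad_def
    using kR_ideal kR_locally_nilpotent nil_ideal_subset_kR r_locnil_imp_r_nil
    by (intro ideal_gen_Union_eq[OF kR_ideal]) auto
  then show ?thesis
    by (simp add: Levitzki)
next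
  case Koethe
  have "nil_rad (palg Q) (pmul Q) = kR Q"
    unfolding nil_rad_def
    using kR_ideal r_locnil_imp_r_nil[OF kR_locally_nilpotent] nil_ideal_subset_kR
    by (intro ideal_gen_Union_eq[OF kR_ideal]) auto
  then show ?thesis
    by (simp add: Koethe)
next
  case Jacobson
  have "jac_rad (palg Q) (pmul Q) = kR Q"
    unfolding jac_rad_def
    using kR_ideal kR_quasi_regular qreg_ideal_subset_kR
    by (intro ideal_gen_Union_eq[OF kR_ideal]) auto
  then show ?thesis
    by (simp add: Jacobson)
qed

lemma gm_rad_eq_kR: "gm_rad r Q = kR Q"
proof -
  have "pcomp Q i j x \<in> kR Q" if "x \<in> kR Q" for x i j
  proof -
    have "{p. pcomp Q i j x p \<noteq> 0} \<subseteq> {p. x p \<noteq> 0}"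
      by (auto simp: pcomp_def)
    with that show ?thesis
      unfolding kR_def palg_def by (auto intro: finite_subset simp: pcomp_def)
  qed
  then show ?thesis
    unfolding gm_rad_def ring_rad_eq_kR
    by (intro ideal_gen_Union_eq[OF kR_ideal]) (auto intro: kR_ideal)
qed

end

section \<open>The Gamma-ring radicals of the components A_ij\<close>

lemma add_span_eqI:
  assumes "add_subgroup J" "S \<subseteq> J" "\<And>G. add_subgroup G \<Longrightarrow> S \<subseteq> G \<Longrightarrow> J \<subseteq> G"
  shows "add_span S = J"
  using assms unfolding add_span_def by blast

lemma g_ideal_gen_Union_eq:
  assumes "g_ideal M G tri J" "J \<in> \<I>" "\<And>I. I \<in> \<I> \<Longrightarrow> I \<subseteq> J"
  shows "g_ideal_gen M G tri (\<Union>\<I>) = J"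
  using assms unfolding g_ideal_gen_def by blast

lemma g_ideal_gen_zero:
  assumes "g_ideal M G tri {0}" "S \<subseteq> {0}"
  shows "g_ideal_gen M G tri S = {0}"
  using assms unfolding g_ideal_gen_def g_ideal_def add_subgroup_def by blast

lemma gfold_replicate_eq_zero:
  assumes "g_nil G tri I \<or> g_locnil G tri I" "x \<in> I" "g \<in> G"
  obtains n where "gfold tri x (replicate n (g, x)) = 0"
  using assms
proof (elim disjE)
  assume "g_nil G tri I"
  then obtain n where "\<forall>gs. length gs = n \<and> set gs \<subseteq> G \<longrightarrow> gfold tri x (map (\<lambda>g. (g, x)) gs) = 0"
    using \<open>x \<in> I\<close> unfolding g_nil_def by blast
  moreover have "set (replicate n g) \<subseteq> G"
    using \<open>g \<in> G\<close> by (induction n) auto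
  ultimately have "gfold tri x (replicate n (g, x)) = 0"
    by (metis length_replicate map_replicate)
  then show thesis
    using that by blast
next
  assume "g_locnil G tri I"
  then obtain n where "\<forall>y ps. y \<in> {x} \<and> length ps = n \<and> set ps \<subseteq> {g} \<times> {x} \<longrightarrow> gfold tri y ps = 0"
    using \<open>x \<in> I\<close> \<open>g \<in> G\<close> unfolding g_locnil_def by (meson empty_subsetI finite.emptyI finite.insertI insert_subset)
  moreover have "set (replicate n (g, x)) \<subseteq> {g} \<times> {x}"
    by (induction n) auto
  ultimately have "gfold tri x (replicate n (g, x)) = 0"
    by simp
  then show thesis
    using that by blast
qed

context
  fixes M :: "'a::ab_group_add set" and tri :: "'a \<Rightarrow> 'a \<Rightarrow> 'a \<Rightarrow> 'a"
  assumes M: "add_subgroup M" and tri: "\<And>a b. tri a 0 b = 0"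
begin

lemma g_ideal_trivial_Gamma: "g_ideal M {0} tri I \<longleftrightarrow> I \<subseteq> M \<and> add_subgroup I"
  unfolding g_ideal_def using tri add_subgroup_zero by fastforce

lemma g_prime_trivial_Gamma: "g_prime M {0} tri P \<longleftrightarrow> P = M"
proof
  assume P: "g_prime M {0} tri P"
  then have "P \<subseteq> M" "0 \<in> P"
    using add_subgroup_zero unfolding g_prime_def g_ideal_def by blast+
  have "\<forall>U V. g_ideal M {0} tri U \<and> g_ideal M {0} tri V \<and>
      (\<forall>u\<in>U. \<forall>g\<in>{0}. \<forall>v\<in>V. tri u g v \<in> P) \<longrightarrow> U \<subseteq> P \<or> V \<subseteq> P"
    using P unfolding g_prime_def by blast
  moreover have "\<forall>u\<in>M. \<forall>g\<in>{0}. \<forall>v\<in>M. tri u g v \<in> P"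
    using \<open>0 \<in> P\<close> tri by simp
  moreover have "g_ideal M {0} tri M"
    using M by (simp add: g_ideal_trivial_Gamma)
  ultimately have "M \<subseteq> P"
    by blast
  with \<open>P \<subseteq> M\<close> show "P = M"
    by blast
next
  assume "P = M"
  then show "g_prime M {0} tri P"
    using M unfolding g_prime_def g_ideal_trivial_Gamma by blast
qed

lemma g_locnil_trivial_Gamma: "g_locnil {0} tri M"
  unfolding g_locnil_def
proof (intro allI impI exI[of _ 1])
  fix F \<Phi> :: "'a set" and x and ps :: "('a \<times> 'a) list"
  assume "finite F \<and> F \<subseteq> M \<and> finite \<Phi> \<and> \<Phi> \<subseteq> {0}" "x \<in> F \<and> length ps = 1 \<and> set ps \<subseteq> \<Phi> \<times> F"
  moreover obtain g y where "ps = [(g, y)]"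
    using calculation by (metis One_nat_def length_0_conv length_Suc_conv surj_pair)
  ultimately show "gfold tri x ps = 0"
    by (auto simp: gfold_def tri)
qed

lemma g_nil_trivial_Gamma: "g_nil {0} tri M"
  unfolding g_nil_def
proof (intro ballI exI[of _ 1] allI impI)
  fix x and gs :: "'a list"
  assume "length gs = 1 \<and> set gs \<subseteq> {0}"
  moreover obtain g where "gs = [g]"
    using calculation by (metis One_nat_def length_0_conv length_Suc_conv)
  ultimately show "gfold tri x (map (\<lambda>g. (g, x)) gs) = 0"
    by (simp add: gfold_def tri)
qed

lemma g_qreg_trivial_Gamma: "g_qreg M {0} tri M"
  unfolding g_qreg_def
proof (intro ballI)
  fix a g :: 'a
  assume "a \<in> M" "g \<in> {0}"
  moreover have "- a \<in> M"
    using M \<open>a \<in> M\<close> unfolding add_subgroup_def by (metis diff_0)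
  ultimately show "\<exists>b\<in>M. a + b + tri a g b = 0"
    using tri by (intro bexI[of _ "- a"]) auto
qed

lemma gamma_rad_trivial_Gamma: "gamma_rad r M {0} tri = M"
proof -
  have "g_ideal_gen M {0} tri (\<Union>{I. g_ideal M {0} tri I \<and> R I}) = M" if "R M" for R
    using M that by (intro g_ideal_gen_Union_eq) (auto simp: g_ideal_trivial_Gamma)
  then show ?thesis
    using g_locnil_trivial_Gamma g_nil_trivial_Gamma g_qreg_trivial_Gamma
    by (cases r) (simp_all add: g_baer_rad_def g_prime_trivial_Gamma g_lev_rad_def g_nil_rad_def g_jac_rad_def)
qed

end

lemma palg_ij_subgroup: "add_subgroup (palg_ij Q i j :: (('v, 'e) qpath \<Rightarrow> 'k::field) set)"
  unfolding palg_ij_eq_palg_on by (rule palg_on_subgroup)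

lemma palg_ij_palg: "f \<in> palg_ij Q i j \<Longrightarrow> f \<in> palg Q"
  by (simp add: palg_ij_def)

lemma palg_ij_ends: "f \<in> palg_ij Q i j \<Longrightarrow> f p \<noteq> 0 \<Longrightarrow> fst p = i \<and> pend Q p = j"
  unfolding palg_ij_def by blast

lemma pmonom_palg_ij: "is_path Q p \<Longrightarrow> pmonom p c \<in> palg_ij Q (fst p) (pend Q p)"
  unfolding palg_ij_eq_palg_on by (rule pmonom_palg_on) auto

lemma g_ideal_zero_palg_ij: "g_ideal (palg_ij Q i j) G (ptri Q) {0 :: ('v, 'e) qpath \<Rightarrow> 'k::field}"
  unfolding g_ideal_def add_subgroup_def using add_subgroup_zero[OF palg_ij_subgroup]
  by (simp add: ptri_def)

lemma palg_ij_no_path: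
  assumes "\<not> has_path Q i j"
  shows "palg_ij Q i j = {0 :: ('v, 'e) qpath \<Rightarrow> 'k::field}"
proof -
  have "f = 0" if f: "f \<in> palg_ij Q i j" for f :: "('v, 'e) qpath \<Rightarrow> 'k"
  proof (rule ext, rule ccontr)
    fix p
    assume "f p \<noteq> 0 p"
    then have "is_path Q p" "fst p = i" "pend Q p = j"
      using palg_path[OF palg_ij_palg[OF f]] palg_ij_ends[OF f] by auto
    then show False
      using assms unfolding has_path_def by blast
  qed
  moreover have "0 \<in> (palg_ij Q i j :: (('v, 'e) qpath \<Rightarrow> 'k) set)"
    by (rule add_subgroup_zero[OF palg_ij_subgroup])
  ultimately show ?thesis
    by blast
qed

lemma palg_ij_subset_kR:
  assumes "\<not> has_path Q j i"
  shows "palg_ij Q i j \<subseteq> kR Q"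
proof
  fix f
  assume f: "f \<in> palg_ij Q i j"
  have "regular_path Q p" if "f p \<noteq> 0" for p
  proof -
    have p: "is_path Q p" "fst p = i" "pend Q p = j"
      using palg_path[OF palg_ij_palg[OF f] that] palg_ij_ends[OF f that] by auto
    moreover have "snd p \<noteq> []"
    proof
      assume "snd p = []"
      then have "pend Q p = fst p"
        by (simp add: pend_def)
      then show False
        using assms has_path_path[OF p(1)] p(2,3) by simp
    qed
    ultimately show ?thesis
      using assms unfolding regular_path_def by simp
  qed
  then show "f \<in> kR Q"
    using palg_ij_palg[OF f] unfolding kR_def by blast
qed

lemma gamma_rad_without_return_path:
  assumes "\<not> has_path Q j i"
  shows "gamma_rad r (palg_ij Q i j) (palg_ij Q j i) (ptri Q) =
    (palg_ij Q i j :: (('v, 'e) qpath \<Rightarrow> 'k::field) set)"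
  unfolding palg_ij_no_path[OF assms]
  by (rule gamma_rad_trivial_Gamma[OF palg_ij_subgroup]) (simp add: ptri_def)

context well_formed_quiver
begin

lemma gfold_ptri_pmul:
  "pmul Q (gfold (ptri Q) x (replicate n (g, x))) g = foldl (pmul Q) (pmul Q x g) (replicate n (pmul Q x g))"
proof (induction n)
  case 0
  then show ?case
    by (simp add: gfold_def)
next
  case (Suc n)
  let ?z = "gfold (ptri Q) x (replicate n (g, x))"
  have "pmul Q (gfold (ptri Q) x (replicate (Suc n) (g, x))) g = pmul Q (pmul Q (pmul Q ?z g) x) g"
    unfolding gfold_def foldl_replicate_Suc by (simp add: ptri_def del: replicate.simps)
  also have "\<dots> = pmul Q (pmul Q ?z g) (pmul Q x g)"
    by (rule pmul_assoc)
  also have "\<dots> = foldl (pmul Q) (pmul Q x g) (replicate (Suc n) (pmul Q x g))"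
    unfolding Suc.IH foldl_replicate_Suc ..
  finally show ?case .
qed

lemma palg_ij_top:
  assumes x: "x \<in> palg_ij Q i j" "x \<noteq> 0"
  obtains L where "is_path Q L" "fst L = i" "pend Q L = j" "x L \<noteq> 0"
    "vanishes_above Q UNIV x (length (snd L))"
proof -
  obtain p where "x p \<noteq> 0"
    using x(2) by (auto simp: fun_eq_iff)
  then obtain L where "is_path Q L" "x L \<noteq> 0" "vanishes_above Q UNIV x (length (snd L))"
    using exists_top_path[OF palg_ij_palg[OF x(1)]] by blast
  with palg_ij_ends[OF x(1)] that show thesis
    by blast
qed

lemma palg_ij_leading_cycle:
  assumes x: "x \<in> palg_ij Q i j" "x \<noteq> 0" and h: "is_path Q h" "fst h = j" "pend Q h = i"
  obtains t c where "leading_cycle Q UNIV (pmul Q x (pmonom h t)) c"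
proof -
  obtain L where L: "is_path Q L" "fst L = i" "pend Q L = j" "x L \<noteq> 0"
    "vanishes_above Q UNIV x (length (snd L))"
    using palg_ij_top[OF x] .
  have "leading_cycle Q UNIV (pmul Q x (pmonom h (- 1 / x L))) (pcat L h)"
    using h L by (intro leading_cycleI) auto
  then show thesis
    using that by blast
qed

lemma g_prime_zero_palg_ij:
  assumes "has_path Q j i"
  shows "g_prime (palg_ij Q i j) (palg_ij Q j i) (ptri Q) {0 :: ('v, 'e) qpath \<Rightarrow> 'k::field}"
  unfolding g_prime_def
proof (intro conjI allI impI)
  show "g_ideal (palg_ij Q i j) (palg_ij Q j i) (ptri Q) {0 :: ('v, 'e) qpath \<Rightarrow> 'k}"
    by (rule g_ideal_zero_palg_ij)
  fix U V :: "(('v, 'e) qpath \<Rightarrow> 'k) set"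
  assume H: "g_ideal (palg_ij Q i j) (palg_ij Q j i) (ptri Q) U \<and>
    g_ideal (palg_ij Q i j) (palg_ij Q j i) (ptri Q) V \<and>
    (\<forall>u\<in>U. \<forall>g\<in>palg_ij Q j i. \<forall>v\<in>V. ptri Q u g v \<in> {0})"
  show "U \<subseteq> {0} \<or> V \<subseteq> {0}"
  proof (rule ccontr)
    assume "\<not> (U \<subseteq> {0} \<or> V \<subseteq> {0})"
    then obtain u v where u: "u \<in> U" "u \<noteq> 0" and v: "v \<in> V" "v \<noteq> 0"
      by blast
    have "u \<in> palg_ij Q i j" "v \<in> palg_ij Q i j"
      using H u v unfolding g_ideal_def by blast+
    then obtain L M where L: "is_path Q L" "fst L = i" "pend Q L = j" "u L \<noteq> 0"
        "vanishes_above Q UNIV u (length (snd L))"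
      and M: "is_path Q M" "fst M = i" "pend Q M = j" "v M \<noteq> 0"
        "vanishes_above Q UNIV v (length (snd M))"
      using palg_ij_top u(2) v(2) by metis
    obtain h where h: "is_path Q h" "fst h = j" "pend Q h = i"
      using assms unfolding has_path_def by blast
    have Lh: "is_path Q (pcat L h)" "pend Q (pcat L h) = i"
      using is_path_pcat[OF L(1) h(1)] pend_pcat[of Q L h] L(3) h(2,3) by simp_all
    have "is_path Q (pcat (pcat L h) M)"
      using is_path_pcat[OF Lh(1) M(1)] Lh(2) M(2) by simp
    then have "ptri Q u (pmonom h 1) v (pcat (pcat L h) M) = u L * 1 * v M"
      unfolding ptri_def using L(3) h(2,3) M(2)
      by (intro pmul_pmonom_pmul_top[OF split_closed_UNIV L(5) M(5)]) simp_all
    moreover have "ptri Q u (pmonom h 1) v = 0"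
      using H u(1) v(1) pmonom_palg_ij[OF h(1)] h by auto
    ultimately show False
      using L(4) M(4) by simp
  qed
qed

lemma g_nil_ideal_subset_zero:
  assumes "has_path Q j i" and I: "g_ideal (palg_ij Q i j) (palg_ij Q j i) (ptri Q) I"
    and nil: "g_nil (palg_ij Q j i) (ptri Q) I \<or> g_locnil (palg_ij Q j i) (ptri Q) I"
  shows "I \<subseteq> {0}"
proof
  fix x
  assume x: "x \<in> I"
  obtain h where h: "is_path Q h" "fst h = j" "pend Q h = i"
    using assms unfolding has_path_def by blast
  show "x \<in> {0}"
  proof (rule ccontr)
    assume "x \<notin> {0}"
    moreover have "x \<in> palg_ij Q i j"
      using I x unfolding g_ideal_def by blast
    ultimately obtain t c where "leading_cycle Q UNIV (pmul Q x (pmonom h t)) c"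
      using palg_ij_leading_cycle h by blast
    moreover obtain n where "gfold (ptri Q) x (replicate n (pmonom h t, x)) = 0"
      using gfold_replicate_eq_zero[OF nil x] pmonom_palg_ij[OF h(1)] h by auto
    then have "foldl (pmul Q) (pmul Q x (pmonom h t)) (replicate n (pmul Q x (pmonom h t))) = 0"
      using gfold_ptri_pmul by (metis pmul_zero_left)
    ultimately show False
      using leading_cycle_not_nilpotent by blast
  qed
qed

lemma g_qreg_ideal_subset_zero:
  assumes "has_path Q j i" and I: "g_ideal (palg_ij Q i j) (palg_ij Q j i) (ptri Q) I"
    and qreg: "g_qreg (palg_ij Q i j) (palg_ij Q j i) (ptri Q) I"
  shows "I \<subseteq> {0}"
proof
  fix x
  assume x: "x \<in> I"
  obtain h where h: "is_path Q h" "fst h = j" "pend Q h = i"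
    using assms unfolding has_path_def by blast
  show "x \<in> {0}"
  proof (rule ccontr)
    assume "x \<notin> {0}"
    moreover have "x \<in> palg_ij Q i j"
      using I x unfolding g_ideal_def by blast
    ultimately obtain t c where lc: "leading_cycle Q UNIV (pmul Q x (pmonom h t)) c"
      using palg_ij_leading_cycle h by blast
    let ?g = "pmonom h t"
    obtain b where b: "b \<in> palg_ij Q i j" "x + b + ptri Q x ?g b = 0"
      using qreg x pmonom_palg_ij[OF h(1)] h unfolding g_qreg_def by fastforce
    \<comment> \<open>Multiplying on the right by g turns the Gamma-quasi-inverse b of x into a quasi-inverse b g of x g.\<close>
    have "pmul Q x ?g + pmul Q b ?g + pmul Q (pmul Q x ?g) (pmul Q b ?g) = pmul Q (x + b + ptri Q x ?g b) ?g"
      by (simp add: pmul_add_left ptri_def pmul_assoc)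
    then have "pmul Q x ?g + pmul Q b ?g + pmul Q (pmul Q x ?g) (pmul Q b ?g) = 0"
      using b(2) by simp
    moreover have "pmul Q b ?g \<in> palg Q"
      using palg_ij_palg[OF b(1)] pmonom_palg[OF h(1)] by (rule palg_pmul)
    ultimately show False
      using leading_cycle_not_quasi_regular[OF lc] by blast
  qed
qed

lemma gamma_rad_with_return_path:
  assumes "has_path Q j i"
  shows "gamma_rad r (palg_ij Q i j) (palg_ij Q j i) (ptri Q) = {0 :: ('v, 'e) qpath \<Rightarrow> 'k::field}"
proof (cases r)
  case Baer
  have "g_baer_rad (palg_ij Q i j) (palg_ij Q j i) (ptri Q) = {0 :: ('v, 'e) qpath \<Rightarrow> 'k}"
    using g_prime_zero_palg_ij[OF assms] unfolding g_baer_rad_def g_prime_def g_ideal_def add_subgroup_def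
    by blast
  then show ?thesis
    using Baer by simp
next
  case Levitzki
  have "\<Union>{I. g_ideal (palg_ij Q i j) (palg_ij Q j i) (ptri Q) I \<and> g_locnil (palg_ij Q j i) (ptri Q) I}
      \<subseteq> {0 :: ('v, 'e) qpath \<Rightarrow> 'k}"
    using g_nil_ideal_subset_zero[OF assms] by blast
  then show ?thesis
    using Levitzki by (simp add: g_lev_rad_def g_ideal_gen_zero g_ideal_zero_palg_ij)
next
  case Koethe
  have "\<Union>{I. g_ideal (palg_ij Q i j) (palg_ij Q j i) (ptri Q) I \<and> g_nil (palg_ij Q j i) (ptri Q) I}
      \<subseteq> {0 :: ('v, 'e) qpath \<Rightarrow> 'k}"
    using g_nil_ideal_subset_zero[OF assms] by blast
  then show ?thesis
    using Koethe by (simp add: g_nil_rad_def g_ideal_gen_zero g_ideal_zero_palg_ij)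
next
  case Jacobson
  have "\<Union>{I. g_ideal (palg_ij Q i j) (palg_ij Q j i) (ptri Q) I \<and> g_qreg (palg_ij Q i j) (palg_ij Q j i) (ptri Q) I}
      \<subseteq> {0 :: ('v, 'e) qpath \<Rightarrow> 'k}"
    using g_qreg_ideal_subset_zero[OF assms] by blast
  then show ?thesis
    using Jacobson by (simp add: g_jac_rad_def g_ideal_gen_zero g_ideal_zero_palg_ij)
qed

lemma gamma_rad_palg_ij_subset_kR:
  "gamma_rad r (palg_ij Q i j) (palg_ij Q j i) (ptri Q) \<subseteq> (kR Q :: (('v, 'e) qpath \<Rightarrow> 'k::field) set)"
proof (cases "has_path Q j i")
  case True
  have "0 \<in> (kR Q :: (('v, 'e) qpath \<Rightarrow> 'k) set)"
    unfolding kR_eq_palg_on by (rule add_subgroup_zero[OF palg_on_subgroup])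
  then show ?thesis
    unfolding gamma_rad_with_return_path[OF True] by simp
next
  case False
  then show ?thesis
    unfolding gamma_rad_without_return_path[OF False] by (rule palg_ij_subset_kR)
qed

lemma sum_gamma_rad_eq_kR: "sum_gamma_rad r Q = (kR Q :: (('v, 'e) qpath \<Rightarrow> 'k::field) set)"
proof -
  let ?U = "\<Union>i\<in>verts Q. \<Union>j\<in>verts Q.
    (gamma_rad r (palg_ij Q i j) (palg_ij Q j i) (ptri Q) :: (('v, 'e) qpath \<Rightarrow> 'k) set)"
  have "add_span ?U = kR Q"
  proof (rule add_span_eqI)
    show "add_subgroup (kR Q :: (('v, 'e) qpath \<Rightarrow> 'k) set)"
      unfolding kR_eq_palg_on by (rule palg_on_subgroup)
    show "?U \<subseteq> kR Q"
      using gamma_rad_palg_ij_subset_kR by blast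
    fix G
    assume G: "add_subgroup G" "?U \<subseteq> G"
    show "kR Q \<subseteq> G"
    proof
      fix x :: "('v, 'e) qpath \<Rightarrow> 'k"
      assume x: "x \<in> kR Q"
      show "x \<in> G"
      proof (rule palg_mem_add_subgroupI[OF G(1) kR_palg[OF x]])
        fix p
        assume "x p \<noteq> 0"
        with x have p: "regular_path Q p"
          by (rule kR_regular)
        then have "pmonom p (x p) \<in> gamma_rad r (palg_ij Q (fst p) (pend Q p)) (palg_ij Q (pend Q p) (fst p)) (ptri Q)"
          unfolding regular_path_def by (simp add: gamma_rad_without_return_path pmonom_palg_ij)
        moreover have "fst p \<in> verts Q" "pend Q p \<in> verts Q"
          using p path_verts unfolding regular_path_def by simp_all
        ultimately show "pmonom p (x p) \<in> G"
          using G(2) by blast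
      qed
    qed
  qed
  then show ?thesis
    unfolding sum_gamma_rad_def .
qed

end

theorem theorem3p3:
  fixes Q :: "('v, 'e) quiver" and r :: radical_kind
  assumes "wf_quiver Q"
  shows "ring_rad r (palg Q) (pmul Q) = gm_rad r Q \<and>
         gm_rad r Q = sum_gamma_rad r Q \<and>
         sum_gamma_rad r Q = (kR Q :: (('v, 'e) qpath \<Rightarrow> 'k::field) set)"
proof -
  interpret well_formed_quiver Q
    using assms by unfold_locales
  show ?thesis
    by (simp add: ring_rad_eq_kR gm_rad_eq_kR sum_gamma_rad_eq_kR)
qed

end
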